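(* Assume that, under model $M_j$ (true rank $k=j$), the top eigenvalues $\ell_1\ge\ell_2\ge\cdots$ of $X$ satisfy $\ell_i \to \psi_{\sigma}(\lambda_i)$ almost surely for $1 \le i \le j$ and $\ell_i \to 2\sigma$ almost surely for $j < i \le q$, where $\psi_\sigma(x)=x+\sigma^2/x$, and moreover that for any fixed $i>j$, $N^{2/3}(\ell_i - 2\sigma)$ converges in distribution to the GOE Tracy–Widom distribution of order $i-j$. Let $\delta_N$ be a sequence such that $\delta_N \to 0$ and $\delta_N \gg N^{-2/3}$. Then, under the assumption that $q$ and the eigenvalues of $A$ are fixed (do not change with $N$), $\hat{k}_{2 + \delta_N}$ is weakly consistent for $k$, i.e. $\mathbb{P}(\hat{k}_{2 + \delta_N} = k) \to 1$. This is true regardless of whether $\sigma$ is known or unknown.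
   Context: Spiked GOE model $X = A + \sigma G$, where $G$ is an $N\times N$ GOE matrix (symmetric, upper-diagonal entries i.i.d. $\mathcal N(0,1/N)$, diagonal entries i.i.d. $\mathcal N(0,2/N)$), and $A=\sum_{i=1}^k\lambda_i u_iu_i^\top$ is positive semi-definite of rank $k$ with $\lambda_1\ge\cdots\ge\lambda_k>\sigma$. Let $\ell_1\ge\cdots\ge\ell_N$ be the eigenvalues of $X$. Candidate models $M_0,\dots,M_q$, where under $M_j$ the rank is $j$. The generalised AIC scores are: for known $\sigma$, $\mathrm{GAIC}_\gamma(j) = -2\log C_N + \frac{N(N+1)}{2}\log\sigma^2 + \frac{N}{2\sigma^2}\sum_{i>j}\ell_i^2 + \gamma\big(Nj - \frac{j(j-1)}{2}\big)$; for unknown $\sigma$, with $\hat{\sigma}^2_j = \frac{1}{N+1}\sum_{i>j}\ell_i^2$, $\mathrm{GAIC}_\gamma(j) = -2\log C_N + \frac{N(N+1)}{2}\log\hat\sigma^2_j + \frac{N}{2\hat\sigma^2_j}\sum_{i>j}\ell_i^2 + \gamma\big(1+Nj - \frac{j(j-1)}{2}\big)$, where $C_N$ is a normalising constant. The estimator $\hat k_\gamma$ is the minimiser of $\mathrm{GAIC}_\gamma(j)$ over $j\in\{0,1,\dots,q\}$; here $\gamma=2+\delta_N$. *)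

theory Defs
  imports "HOL-Probability.Probability" "Jordan_Normal_Form.Char_Poly"
begin

text \<open>Spiked GOE model X = A + sg G of size N x N.
  g N i j w (for i \<le> j < N) are the upper-triangular GOE entries of G_N;
  u N r (r = 1..k) are the spike directions in R^N (entries indexed 0..N-1);
  lam r (r = 1..k) are the spike strengths.\<close>

definition spiked_X ::
  "nat \<Rightarrow> (nat \<Rightarrow> real) \<Rightarrow> (nat \<Rightarrow> nat \<Rightarrow> nat \<Rightarrow> real) \<Rightarrow> real
   \<Rightarrow> (nat \<Rightarrow> nat \<Rightarrow> nat \<Rightarrow> 'a \<Rightarrow> real) \<Rightarrow> nat \<Rightarrow> 'a \<Rightarrow> real mat" where
  "spiked_X k lam u sg g N w =
     mat N N (\<lambda>(i, j). (\<Sum>r\<in>{1..k}. lam r * u N r i * u N r j)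
                       + sg * g N (min i j) (max i j) w)"

definition eigs_desc :: "real mat \<Rightarrow> real list" where
  "eigs_desc X = rev (sorted_list_of_multiset (proots (char_poly X)))"

text \<open>ell_i, 1-indexed: the i-th largest eigenvalue.\<close>

definition eig :: "real mat \<Rightarrow> nat \<Rightarrow> real" where
  "eig X i = eigs_desc X ! (i - 1)"

definition tail_sq :: "nat \<Rightarrow> real mat \<Rightarrow> nat \<Rightarrow> real" where
  "tail_sq N X j = (\<Sum>i\<in>{j+1..N}. (eig X i)\<^sup>2)"

definition sigma_hat_sq :: "nat \<Rightarrow> real mat \<Rightarrow> nat \<Rightarrow> real" where
  "sigma_hat_sq N X j = tail_sq N X j / (real N + 1)"

definition gaic_known :: "real \<Rightarrow> real \<Rightarrow> real \<Rightarrow> nat \<Rightarrow> real mat \<Rightarrow> nat \<Rightarrow> real" where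
  "gaic_known CN sg gam N X j =
     - 2 * ln CN + real N * (real N + 1) / 2 * ln (sg\<^sup>2)
     + real N / (2 * sg\<^sup>2) * tail_sq N X j
     + gam * (real N * real j - real j * (real j - 1) / 2)"

definition gaic_unknown :: "real \<Rightarrow> real \<Rightarrow> nat \<Rightarrow> real mat \<Rightarrow> nat \<Rightarrow> real" where
  "gaic_unknown CN gam N X j =
     - 2 * ln CN + real N * (real N + 1) / 2 * ln (sigma_hat_sq N X j)
     + real N / (2 * sigma_hat_sq N X j) * tail_sq N X j
     + gam * (1 + real N * real j - real j * (real j - 1) / 2)"

definition argmin_upto :: "(nat \<Rightarrow> real) \<Rightarrow> nat \<Rightarrow> nat" where
  "argmin_upto score q = (LEAST j. j \<le> q \<and> (\<forall>j'\<le>q. score j \<le> score j'))"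

end

theory Submission
  imports Defs "Jordan_Normal_Form.Schur_Decomposition"
begin

(* Both criteria are compared between consecutive model orders. With known sigma,
   GAIC(j) - GAIC(j - 1) = gamma (N - j + 1) - N l_j^2 / (2 sigma^2), so the score decreases exactly
   while l_j^2 exceeds 2 gamma sigma^2 (N - j + 1) / N; with unknown sigma the same holds with the
   residual variance estimates in place of sigma^2, up to the bounds given by ln x <= x - 1.
   For gamma = 2 + delta_N the threshold is (2 sigma)^2 (1 + delta_N / 2 + O(1 / N)). The spiked
   eigenvalues converge to psi(lambda_i) > 2 sigma and stay above it, while the next ones are
   2 sigma + O_P(N^(-2/3)) and, as delta_N >> N^(-2/3), stay below it. So with probability tending
   to one the score is strictly decreasing up to k and strictly increasing afterwards.
   For unknown sigma the residual variances must moreover be sigma^2 (1 + o_P(delta_N)): the sum of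
   all squared eigenvalues is the squared Frobenius norm of X, which by Chebyshev's inequality is
   (N + 1) sigma^2 + sum_i lambda_i^2 + O_P(1). *)

section \<open>Eigenvalues of real symmetric matrices\<close>

lemma real_symmetric_eigenvalue_real:
  fixes X :: "real mat" and a :: complex
  assumes X: "X \<in> carrier_mat n n" and sym: "\<And>i j. i < n \<Longrightarrow> j < n \<Longrightarrow> X $$ (i,j) = X $$ (j,i)"
    and ev: "eigenvalue (map_mat complex_of_real X) a"
  shows "Im a = 0"
proof -
  let ?Xc = "map_mat complex_of_real X"
  obtain v where v: "eigenvector ?Xc v a" using ev unfolding eigenvalue_def by blast
  have vc: "v \<in> carrier_vec n" and v0: "v \<noteq> 0\<^sub>v n" and eq: "?Xc *\<^sub>v v = a \<cdot>\<^sub>v v"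
    using v X unfolding eigenvector_def by auto
  have row_eq: "(\<Sum>j<n. of_real (X $$ (i,j)) * v $ j) = a * v $ i" if "i < n" for i
  proof -
    have "(?Xc *\<^sub>v v) $ i = (a \<cdot>\<^sub>v v) $ i" using eq by simp
    then show ?thesis using that X vc
      by (simp add: scalar_prod_def row_def atLeast0LessThan mult.commute)
  qed
  define s where "s = (\<Sum>i<n. cnj (v $ i) * (\<Sum>j<n. of_real (X $$ (i,j)) * v $ j))"
  define p where "p = (\<Sum>i<n. (cmod (v $ i))\<^sup>2)"
  \<comment> \<open>the quadratic form \<open>s = v\<^sup>* X v\<close> is real because \<open>X\<close> is symmetric, and equals \<open>a p\<close>\<close>
  have "s = (\<Sum>i<n. cnj (v $ i) * (a * v $ i))"
    unfolding s_def by (intro sum.cong) (auto simp: row_eq)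
  also have "\<dots> = a * of_real p"
    unfolding p_def of_real_sum
    by (auto simp: sum_distrib_left complex_norm_square mult_ac simp del: of_real_power intro!: sum.cong)
  finally have "s = a * of_real p" .
  moreover have "cnj s = s"
  proof -
    have "cnj s = (\<Sum>i<n. \<Sum>j<n. v $ i * of_real (X $$ (i,j)) * cnj (v $ j))"
      unfolding s_def by (simp add: cnj_sum sum_distrib_left mult.assoc)
    also have "\<dots> = (\<Sum>j<n. \<Sum>i<n. v $ i * of_real (X $$ (i,j)) * cnj (v $ j))"
      by (rule sum.swap)
    also have "\<dots> = s"
      unfolding s_def by (auto intro!: sum.cong simp: sum_distrib_left sym mult_ac)
    finally show ?thesis .
  qed
  moreover have "0 < p"
  proof -
    obtain i where i: "i < n" "v $ i \<noteq> 0"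
      using v0 vc by (metis carrier_vecD eq_vecI index_zero_vec)
    have "(cmod (v $ i))\<^sup>2 \<le> p" unfolding p_def using i by (intro member_le_sum) auto
    moreover have "0 < (cmod (v $ i))\<^sup>2" using i by simp
    ultimately show ?thesis by linarith
  qed
  ultimately have "cnj a = a" by (metis complex_cnj_mult complex_cnj_complex_of_real mult_cancel_right
        of_real_eq_0_iff less_irrefl)
  then show ?thesis by (metis Reals_cnj_iff complex_is_Real_iff)
qed

lemma char_poly_real_symmetric_factorized:
  fixes X :: "real mat"
  assumes X: "X \<in> carrier_mat n n" and sym: "\<And>i j. i < n \<Longrightarrow> j < n \<Longrightarrow> X $$ (i,j) = X $$ (j,i)"
  obtains es where "char_poly X = (\<Prod>e\<leftarrow>es. [:-e,1:])" and "length es = n"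
proof -
  interpret c: map_poly_inj_idom_hom "of_real :: real \<Rightarrow> complex" ..
  let ?Xc = "map_mat complex_of_real X"
  obtain as where cp: "char_poly ?Xc = (\<Prod>a\<leftarrow>as. [:-a,1:])" and len: "length as = n"
    using char_poly_factorized[of ?Xc n] X by auto
  have "Im a = 0" if "a \<in> set as" for a
  proof (rule real_symmetric_eigenvalue_real[OF X sym])
    have "poly (char_poly ?Xc) a = 0"
      unfolding cp using that by (auto simp: poly_prod_list prod_list_zero_iff)
    then show "eigenvalue ?Xc a" using eigenvalue_root_char_poly[of ?Xc n] X by simp
  qed
  then have as_real: "map (of_real \<circ> Re) as = as"
    by (intro map_idI) (simp add: complex_eq_iff)
  have "map_poly of_real (char_poly X) = char_poly ?Xc"
    by (rule of_real_hom.char_poly_hom[OF X, symmetric])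
  also have "\<dots> = map_poly of_real (\<Prod>e\<leftarrow>map Re as. [:-e,1:])"
    unfolding cp c.hom_prod_list by (subst (1) as_real[symmetric]) (simp add: o_def)
  finally have "char_poly X = (\<Prod>e\<leftarrow>map Re as. [:-e,1:])" by simp
  with len show thesis by (intro that[of "map Re as"]) auto
qed

lemma sum_diag_similar_mat:
  fixes P C Q :: "'a :: comm_ring_1 mat"
  assumes P: "P \<in> carrier_mat n n" and C: "C \<in> carrier_mat n n" and Q: "Q \<in> carrier_mat n n"
    and QP: "Q * P = 1\<^sub>m n"
  shows "(\<Sum>i<n. (P * C * Q) $$ (i,i)) = (\<Sum>i<n. C $$ (i,i))"
proof -
  have QP_entry: "(\<Sum>i<n. Q $$ (l,i) * P $$ (i,j)) = (if l = j then 1 else 0)" if "l < n" "j < n" for l j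
    using arg_cong[OF QP, of "\<lambda>A. A $$ (l,j)"] that P Q
    by (simp add: scalar_prod_def row_def col_def atLeast0LessThan)
  have "(\<Sum>i<n. (P * C * Q) $$ (i,i)) = (\<Sum>i<n. \<Sum>j<n. \<Sum>l<n. P $$ (i,j) * C $$ (j,l) * Q $$ (l,i))"
    using P C Q by (intro sum.cong) (auto simp: scalar_prod_def row_def col_def atLeast0LessThan
        sum_distrib_left sum_distrib_right mult.assoc)
  also have "\<dots> = (\<Sum>j<n. \<Sum>i<n. \<Sum>l<n. P $$ (i,j) * C $$ (j,l) * Q $$ (l,i))"
    by (rule sum.swap)
  also have "\<dots> = (\<Sum>j<n. \<Sum>l<n. \<Sum>i<n. P $$ (i,j) * C $$ (j,l) * Q $$ (l,i))"
    by (intro sum.cong refl sum.swap)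
  also have "\<dots> = (\<Sum>j<n. \<Sum>l<n. C $$ (j,l) * (\<Sum>i<n. Q $$ (l,i) * P $$ (i,j)))"
    by (simp add: sum_distrib_left mult_ac)
  also have "\<dots> = (\<Sum>j<n. \<Sum>l<n. if l = j then C $$ (j,j) else 0)"
    by (intro sum.cong refl) (simp add: QP_entry)
  also have "\<dots> = (\<Sum>j<n. C $$ (j,j))"
    by simp
  finally show ?thesis .
qed

lemma sum_sq_roots_char_poly:
  fixes X :: "real mat"
  assumes X: "X \<in> carrier_mat n n" and cp: "char_poly X = (\<Prod>e\<leftarrow>es. [:-e,1:])"
  shows "(\<Sum>e\<leftarrow>es. e\<^sup>2) = (\<Sum>i<n. \<Sum>j<n. X $$ (i,j) * X $$ (j,i))"
proof -
  obtain B P Q where "schur_decomposition X es = (B,P,Q)"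
    by (cases "schur_decomposition X es") auto
  from schur_decomposition[OF X cp this]
  have sim: "similar_mat_wit X B P Q" and ut: "upper_triangular B" and dg: "diag_mat B = es" by auto
  from similar_mat_witD2[OF X sim]
  have B: "B \<in> carrier_mat n n" and P: "P \<in> carrier_mat n n" and Q: "Q \<in> carrier_mat n n"
    and QP: "Q * P = 1\<^sub>m n" and XE: "X = P * B * Q" by auto
  have "X * X = P * (B * (Q * P) * B) * Q"
    unfolding XE using B P Q by (simp add: assoc_mult_mat[of _ n n _ n _ n])
  then have XX: "X * X = P * (B * B) * Q" using QP B by simp
  have BB_diag: "(B * B) $$ (i,i) = (B $$ (i,i))\<^sup>2" if "i < n" for i
  proof -
    have "(B * B) $$ (i,i) = (\<Sum>l<n. B $$ (i,l) * B $$ (l,i))"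
      using B that by (simp add: scalar_prod_def row_def col_def atLeast0LessThan)
    also have "\<dots> = (\<Sum>l<n. if l = i then B $$ (i,i) * B $$ (i,i) else 0)"
    proof (intro sum.cong refl)
      fix l assume "l \<in> {..<n}"
      then show "B $$ (i,l) * B $$ (l,i) = (if l = i then B $$ (i,i) * B $$ (i,i) else 0)"
        using ut B that by (cases "l < i") (auto simp: upper_triangular_def)
    qed
    finally show ?thesis using that by (simp add: power2_eq_square)
  qed
  have "(\<Sum>i<n. \<Sum>j<n. X $$ (i,j) * X $$ (j,i)) = (\<Sum>i<n. (X * X) $$ (i,i))"
    using X by (intro sum.cong) (auto simp: scalar_prod_def row_def col_def atLeast0LessThan)
  also have "\<dots> = (\<Sum>i<n. (B * B) $$ (i,i))"
    unfolding XX using B by (intro sum_diag_similar_mat[OF P _ Q QP]) simp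
  also have "\<dots> = (\<Sum>i<n. (B $$ (i,i))\<^sup>2)"
    by (rule sum.cong[OF refl BB_diag]) simp
  also have "\<dots> = (\<Sum>e\<leftarrow>es. e\<^sup>2)"
    using B by (simp add: dg[symmetric] diag_mat_def sum_list_sum_nth atLeast0LessThan)
  finally show ?thesis ..
qed

lemma tail_sq_0_eq_sum_sq_entries:
  fixes X :: "real mat"
  assumes X: "X \<in> carrier_mat N N" and sym: "\<And>i j. i < N \<Longrightarrow> j < N \<Longrightarrow> X $$ (i,j) = X $$ (j,i)"
  shows "tail_sq N X 0 = (\<Sum>i<N. \<Sum>j<N. (X $$ (i,j))\<^sup>2)"
proof -
  obtain es where cp: "char_poly X = (\<Prod>e\<leftarrow>es. [:-e,1:])" and len: "length es = N"
    using char_poly_real_symmetric_factorized[OF X sym] .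
  have "0 \<notin> set (map (\<lambda>e. [:-e,1::real:]) es)"
    by auto
  from proots_prod_list[OF this] have "proots (\<Prod>e\<leftarrow>es. [:-e,1::real:]) = mset es"
    by (simp add: o_def)
  then have mset_eigs: "mset (eigs_desc X) = mset es"
    unfolding eigs_desc_def cp by simp
  then have len_eigs: "length (eigs_desc X) = N"
    using len by (metis size_mset)
  have "tail_sq N X 0 = (\<Sum>i<N. (eigs_desc X ! i)\<^sup>2)"
    unfolding tail_sq_def eig_def by (simp add: sum.atLeast1_atMost_eq)
  also have "\<dots> = (\<Sum>e\<leftarrow>eigs_desc X. e\<^sup>2)"
    using len_eigs by (simp add: sum_list_sum_nth atLeast0LessThan)
  also have "\<dots> = (\<Sum>e\<leftarrow>es. e\<^sup>2)"
    by (metis mset_eigs mset_map sum_mset_sum_list)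
  also have "\<dots> = (\<Sum>i<N. \<Sum>j<N. X $$ (i,j) * X $$ (j,i))"
    by (rule sum_sq_roots_char_poly[OF X cp])
  also have "\<dots> = (\<Sum>i<N. \<Sum>j<N. (X $$ (i,j))\<^sup>2)"
    by (intro sum.cong refl) (simp add: sym power2_eq_square)
  finally show ?thesis .
qed


section \<open>Comparing consecutive model orders\<close>

lemma argmin_upto_eq_iff:
  "argmin_upto f q = k \<longleftrightarrow>
     k \<le> q \<and> (\<forall>j\<le>q. f k \<le> f j) \<and> (\<forall>i<k. \<not> (i \<le> q \<and> (\<forall>j\<le>q. f i \<le> f j)))"
proof -
  define P where "P i \<longleftrightarrow> i \<le> q \<and> (\<forall>j\<le>q. f i \<le> f j)" for i
  have "Min (f ` {..q}) \<in> f ` {..q}"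
    by (intro Min_in) auto
  then obtain i where "i \<le> q" "f i = Min (f ` {..q})"
    by (metis atMost_iff imageE)
  then have "P i" unfolding P_def by simp
  then have "argmin_upto f q = k \<longleftrightarrow> P k \<and> (\<forall>i<k. \<not> P i)"
    unfolding argmin_upto_def P_def[symmetric]
    by (metis LeastI Least_le leD linorder_neqE_nat not_less_Least)
  then show ?thesis unfolding P_def by (simp only: conj_assoc)
qed

lemma measurable_argmin_upto_eq:
  assumes "\<And>j. (\<lambda>w. f w j :: real) \<in> borel_measurable M"
  shows "Measurable.pred M (\<lambda>w. argmin_upto (f w) q = k)"
proof -
  have [measurable]: "(\<lambda>w. f w j) \<in> borel_measurable M" for j
    by (rule assms)
  show ?thesis
    unfolding argmin_upto_eq_iff by measurable
qed

lemma argmin_upto_eq_valley: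
  fixes f :: "nat \<Rightarrow> real"
  assumes "k \<le> q"
    and down: "\<And>j. 1 \<le> j \<Longrightarrow> j \<le> k \<Longrightarrow> f j < f (j - 1)"
    and up: "\<And>j. k < j \<Longrightarrow> j \<le> q \<Longrightarrow> f (j - 1) < f j"
  shows "argmin_upto f q = k"
proof -
  have le_left: "f k \<le> f i" if "i \<le> k" for i
    using that
  proof (induction rule: inc_induct)
    case (step n)
    then show ?case using down[of "Suc n"] by simp
  qed simp
  have le_right: "f k \<le> f j" if "k \<le> j" "j \<le> q" for j
    using that
  proof (induction j rule: dec_induct)
    case (step n)
    then show ?case using up[of "Suc n"] by simp
  qed simp
  have less: "f k < f i" if "i \<le> q" "i \<noteq> k" for i
  proof (cases "i < k")
    case True
    then show ?thesis using le_left[of "Suc i"] down[of "Suc i"] by simp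
  next
    case False
    then have "k \<le> i - 1" "k < i" using that by auto
    then show ?thesis using that le_right[of "i - 1"] up[of i] by force
  qed
  show ?thesis
    unfolding argmin_upto_eq_iff using assms(1) le_left le_right less
    by (metis le_cases less_le_not_le order.strict_implies_not_eq)
qed

lemma ln_diff_le: "0 < x \<Longrightarrow> 0 < y \<Longrightarrow> ln x - ln y \<le> (x - y) / (y :: real)"
  using ln_le_minus_one[of "x / y"] by (simp add: ln_div diff_divide_distrib)

lemma tail_sq_pred:
  assumes "1 \<le> j" "j \<le> N"
  shows "tail_sq N X (j - 1) = (eig X j)\<^sup>2 + tail_sq N X j"
  using assms unfolding tail_sq_def by (simp add: sum.atLeast_Suc_atMost)

lemma tail_sq_antimono: "j \<le> j' \<Longrightarrow> tail_sq N X j' \<le> tail_sq N X j"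
  unfolding tail_sq_def by (intro sum_mono2) auto

lemma tail_sq_0_eq: "j \<le> N \<Longrightarrow> tail_sq N X 0 = (\<Sum>i=1..j. (eig X i)\<^sup>2) + tail_sq N X j"
  by (induction j) (simp_all add: tail_sq_pred[of "Suc _", simplified])

lemma gaic_known_diff:
  assumes "1 \<le> j" "j \<le> N"
  shows "gaic_known C s \<gamma> N X j - gaic_known C s \<gamma> N X (j - 1)
        = \<gamma> * (real N - real j + 1) - real N * (eig X j)\<^sup>2 / (2 * s\<^sup>2)"
  using assms unfolding gaic_known_def tail_sq_pred[OF assms]
  by (simp add: of_nat_diff algebra_simps add_divide_distrib diff_divide_distrib)

lemma gaic_unknown_diff:
  assumes "1 \<le> j" "j \<le> N" "0 < tail_sq N X j"
  shows "gaic_unknown C \<gamma> N X j - gaic_unknown C \<gamma> N X (j - 1)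
        = \<gamma> * (real N - real j + 1)
          - real N * (real N + 1) / 2 * (ln (tail_sq N X (j - 1)) - ln (tail_sq N X j))"
proof -
  have pos: "0 < tail_sq N X (j - 1)"
    using assms tail_sq_antimono[of "j - 1" j N X] by simp
  have fit: "real N / (2 * sigma_hat_sq N X i) * tail_sq N X i = real N * (real N + 1) / 2"
    and ln_sigma: "ln (sigma_hat_sq N X i) = ln (tail_sq N X i) - ln (real N + 1)"
    if "0 < tail_sq N X i" for i
    using that unfolding sigma_hat_sq_def by (simp_all add: ln_div)
  show ?thesis
    unfolding gaic_unknown_def fit[OF assms(3)] fit[OF pos] ln_sigma[OF assms(3)] ln_sigma[OF pos]
    using assms by (simp add: of_nat_diff algebra_simps add_divide_distrib diff_divide_distrib)
qed

lemma argmin_gaic_known_eq: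
  assumes "k \<le> q" "q \<le> N" "s \<noteq> 0"
    and spike: "\<And>j. j \<in> {1..k} \<Longrightarrow> 2 * s\<^sup>2 * \<gamma> * (real N - real j + 1) < real N * (eig X j)\<^sup>2"
    and bulk: "\<And>j. j \<in> {k+1..q} \<Longrightarrow> real N * (eig X j)\<^sup>2 < 2 * s\<^sup>2 * \<gamma> * (real N - real j + 1)"
  shows "argmin_upto (gaic_known C s \<gamma> N X) q = k"
proof (rule argmin_upto_eq_valley[OF assms(1)])
  have diff: "gaic_known C s \<gamma> N X j - gaic_known C s \<gamma> N X (j - 1)
      = (2 * s\<^sup>2 * \<gamma> * (real N - real j + 1) - real N * (eig X j)\<^sup>2) / (2 * s\<^sup>2)"
    if "1 \<le> j" "j \<le> q" for j
    using gaic_known_diff[of j N C s \<gamma> X] that assms(2,3) by (simp add: field_simps)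
  have s2: "0 < 2 * s\<^sup>2" using assms(3) by simp
  show "gaic_known C s \<gamma> N X j < gaic_known C s \<gamma> N X (j - 1)" if "1 \<le> j" "j \<le> k" for j
  proof -
    have "(2 * s\<^sup>2 * \<gamma> * (real N - real j + 1) - real N * (eig X j)\<^sup>2) / (2 * s\<^sup>2) < 0"
      using spike[of j] that by (intro divide_neg_pos[OF _ s2]) auto
    then show ?thesis using diff[of j] that assms(1) by simp
  qed
  show "gaic_known C s \<gamma> N X (j - 1) < gaic_known C s \<gamma> N X j" if "k < j" "j \<le> q" for j
  proof -
    have "0 < (2 * s\<^sup>2 * \<gamma> * (real N - real j + 1) - real N * (eig X j)\<^sup>2) / (2 * s\<^sup>2)"
      using bulk[of j] that by (intro divide_pos_pos[OF _ s2]) auto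
    then show ?thesis using diff[of j] that by simp
  qed
qed

lemma argmin_gaic_unknown_eq:
  assumes "k \<le> q" "q \<le> N" "0 < tail_sq N X q"
    and spike: "\<And>j. j \<in> {1..k} \<Longrightarrow>
       2 * \<gamma> * (real N - real j + 1) * tail_sq N X (j - 1) < real N * (real N + 1) * (eig X j)\<^sup>2"
    and bulk: "\<And>j. j \<in> {k+1..q} \<Longrightarrow>
       real N * (real N + 1) * (eig X j)\<^sup>2 < 2 * \<gamma> * (real N - real j + 1) * tail_sq N X j"
  shows "argmin_upto (gaic_unknown C \<gamma> N X) q = k"
proof (rule argmin_upto_eq_valley[OF assms(1)])
  define c where "c = real N * (real N + 1) / 2"
  have c: "0 \<le> c" unfolding c_def by simp
  have pos: "0 < tail_sq N X j" if "j \<le> q" for j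
    using tail_sq_antimono[OF that, of N X] assms(3) by simp
  have diff: "gaic_unknown C \<gamma> N X j - gaic_unknown C \<gamma> N X (j - 1)
      = \<gamma> * (real N - real j + 1) - c * (ln (tail_sq N X (j - 1)) - ln (tail_sq N X j))"
    if "1 \<le> j" "j \<le> q" for j
    unfolding c_def using gaic_unknown_diff[of j N X] that assms(2) pos by simp
  show "gaic_unknown C \<gamma> N X j < gaic_unknown C \<gamma> N X (j - 1)" if j: "1 \<le> j" "j \<le> k" for j
  proof -
    have Tj: "0 < tail_sq N X j" and Tj1: "0 < tail_sq N X (j - 1)"
      using pos j assms(1) by auto
    have "(eig X j)\<^sup>2 / tail_sq N X (j - 1) = (tail_sq N X (j - 1) - tail_sq N X j) / tail_sq N X (j - 1)"
      using tail_sq_pred[of j N X] j assms(1,2) by simp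
    also have "\<dots> \<le> ln (tail_sq N X (j - 1)) - ln (tail_sq N X j)"
      using ln_diff_le[OF Tj Tj1] by (simp add: diff_divide_distrib)
    finally have "c * ((eig X j)\<^sup>2 / tail_sq N X (j - 1)) \<le> c * (ln (tail_sq N X (j - 1)) - ln (tail_sq N X j))"
      by (rule mult_left_mono[OF _ c])
    moreover have "\<gamma> * (real N - real j + 1) < c * ((eig X j)\<^sup>2 / tail_sq N X (j - 1))"
      using spike[of j] Tj1 j unfolding c_def by (simp add: field_simps)
    ultimately show ?thesis
      using diff[of j] j assms(1) by simp
  qed
  show "gaic_unknown C \<gamma> N X (j - 1) < gaic_unknown C \<gamma> N X j" if j: "k < j" "j \<le> q" for j
  proof -
    have Tj: "0 < tail_sq N X j" and Tj1: "0 < tail_sq N X (j - 1)"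
      using pos j by auto
    have "ln (tail_sq N X (j - 1)) - ln (tail_sq N X j) \<le> (tail_sq N X (j - 1) - tail_sq N X j) / tail_sq N X j"
      by (rule ln_diff_le[OF Tj1 Tj])
    also have "\<dots> = (eig X j)\<^sup>2 / tail_sq N X j"
      using tail_sq_pred[of j N X] j assms(2) by simp
    finally have "c * (ln (tail_sq N X (j - 1)) - ln (tail_sq N X j)) \<le> c * ((eig X j)\<^sup>2 / tail_sq N X j)"
      by (rule mult_left_mono[OF _ c])
    moreover have "c * ((eig X j)\<^sup>2 / tail_sq N X j) < \<gamma> * (real N - real j + 1)"
      using bulk[of j] Tj j unfolding c_def by (simp add: field_simps)
    ultimately show ?thesis
      using diff[of j] j by simp
  qed
qed

(* With gamma = 2 + d, a spiked eigenvalue has to exceed the threshold 2 gamma s^2 even after the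
   residual variance has grown by the factor 1 + d/32, and a bulk eigenvalue has to stay below it even
   after losing the factors 1 - d/16 in (N - j + 1) / N and in the residual variance. *)
lemma outlier_sq_gt:
  fixes s d l :: real
  assumes "0 < s" "0 \<le> d" "2 * s * (1 + d) < l"
  shows "2 * (2 + d) * s\<^sup>2 * (1 + d / 32) < l\<^sup>2"
proof -
  have "(2 * s * (1 + d))\<^sup>2 - 2 * (2 + d) * s\<^sup>2 * (1 + d / 32) = s\<^sup>2 * d * (47 / 8 + 63 / 16 * d)"
    by (simp add: power2_eq_square algebra_simps)
  moreover have "0 \<le> s\<^sup>2 * d * (47 / 8 + 63 / 16 * d)"
    using assms(2) by simp
  ultimately have "2 * (2 + d) * s\<^sup>2 * (1 + d / 32) \<le> (2 * s * (1 + d))\<^sup>2"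
    by (metis diff_ge_0_iff_ge)
  also have "\<dots> < l\<^sup>2"
    using assms by (intro power_strict_mono) auto
  finally show ?thesis .
qed

lemma edge_sq_lt:
  fixes s d l :: real
  assumes "0 < s" "0 < d" "d \<le> 1" "\<bar>l - 2 * s\<bar> < s * d / 16"
  shows "l\<^sup>2 < 2 * (2 + d) * s\<^sup>2 * (1 - d / 16)\<^sup>2"
proof -
  have "s * d \<le> s"
    using assms by (simp add: mult_left_le)
  moreover have "2 * s - s * d / 16 < l" "l < 2 * s + s * d / 16"
    using assms(4) unfolding abs_less_iff by linarith+
  ultimately have "0 \<le> l" "l < 2 * s * (1 + d / 32)"
    using assms(1) by (linarith, simp add: algebra_simps)
  then have "l\<^sup>2 < (2 * s * (1 + d / 32))\<^sup>2"
    by (intro power_strict_mono) auto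
  also have "\<dots> < 2 * (2 + d) * s\<^sup>2 * (1 - d / 16)\<^sup>2"
  proof -
    have "(1 + d / 2) * (1 - d / 16)\<^sup>2 - (1 + d / 32)\<^sup>2 = d * (5 / 16 - 61 / 1024 * d + d\<^sup>2 / 512)"
      by (simp add: power2_eq_square field_simps)
    moreover have "0 < d * (5 / 16 - 61 / 1024 * d + d\<^sup>2 / 512)"
      using assms(2,3) zero_le_power2[of d] by (intro mult_pos_pos) linarith+
    ultimately have "(1 + d / 32)\<^sup>2 < (1 + d / 2) * (1 - d / 16)\<^sup>2"
      by (metis diff_gt_0_iff_gt)
    then have "4 * s\<^sup>2 * (1 + d / 32)\<^sup>2 < 4 * s\<^sup>2 * ((1 + d / 2) * (1 - d / 16)\<^sup>2)"
      using assms(1) by (intro mult_strict_left_mono) auto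
    moreover have "(2 * s * (1 + d / 32))\<^sup>2 = 4 * s\<^sup>2 * (1 + d / 32)\<^sup>2"
      by (simp add: power_mult_distrib)
    moreover have "2 * (2 + d) * s\<^sup>2 * (1 - d / 16)\<^sup>2 = 4 * s\<^sup>2 * ((1 + d / 2) * (1 - d / 16)\<^sup>2)"
      by (simp add: algebra_simps)
    ultimately show ?thesis
      by linarith
  qed
  finally show ?thesis .
qed

lemma tail_sq_bounds:
  assumes "q \<le> N" and noise: "\<bar>sigma_hat_sq N X 0 - s\<^sup>2\<bar> < s\<^sup>2 * d / 32"
    and top: "(\<Sum>i=1..q. (eig X i)\<^sup>2) \<le> (real N + 1) * s\<^sup>2 * d / 32"
  shows "tail_sq N X 0 \<le> (real N + 1) * s\<^sup>2 * (1 + d / 32)"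
    and "(real N + 1) * s\<^sup>2 * (1 - d / 16) \<le> tail_sq N X q"
proof -
  have T0_eq: "tail_sq N X 0 = (real N + 1) * sigma_hat_sq N X 0"
    unfolding sigma_hat_sq_def by simp
  have "sigma_hat_sq N X 0 \<le> s\<^sup>2 * (1 + d / 32)" "s\<^sup>2 * (1 - d / 32) \<le> sigma_hat_sq N X 0"
    using noise unfolding abs_less_iff by (auto simp: algebra_simps)
  then have "tail_sq N X 0 \<le> (real N + 1) * s\<^sup>2 * (1 + d / 32)"
    "(real N + 1) * s\<^sup>2 * (1 - d / 32) \<le> tail_sq N X 0"
    unfolding T0_eq mult.assoc by (auto intro: mult_left_mono)
  then show "tail_sq N X 0 \<le> (real N + 1) * s\<^sup>2 * (1 + d / 32)"
    and "(real N + 1) * s\<^sup>2 * (1 - d / 16) \<le> tail_sq N X q"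
    using tail_sq_0_eq[OF assms(1), of X] top by (simp_all add: algebra_simps)
qed

lemma argmin_gaic_known_eq_rank:
  assumes "k \<le> q" "q \<le> N" "0 < s" "0 < d" "d \<le> 1" "16 * real q \<le> real N * d"
    and spike: "\<And>i. i \<in> {1..k} \<Longrightarrow> 2 * s * (1 + d) < eig X i"
    and bulk: "\<And>j. j \<in> {k+1..q} \<Longrightarrow> \<bar>eig X j - 2 * s\<bar> < s * d / 16"
  shows "argmin_upto (gaic_known C s (2 + d) N X) q = k"
proof (rule argmin_gaic_known_eq[OF assms(1,2)])
  show "s \<noteq> 0" using assms(3) by simp
  fix j
  assume j: "j \<in> {1..k}"
  have "2 * (2 + d) * s\<^sup>2 * (1 + d / 32) - 2 * s\<^sup>2 * (2 + d) = s\<^sup>2 * d * (2 + d) / 16"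
    by (simp add: algebra_simps)
  moreover have "0 \<le> s\<^sup>2 * d * (2 + d) / 16"
    using assms(4) by simp
  moreover have "2 * (2 + d) * s\<^sup>2 * (1 + d / 32) < (eig X j)\<^sup>2"
    using outlier_sq_gt[OF assms(3) _ spike[OF j]] assms(4) by simp
  ultimately have gt: "2 * s\<^sup>2 * (2 + d) < (eig X j)\<^sup>2"
    by linarith
  have "2 * s\<^sup>2 * (2 + d) * (real N - real j + 1) \<le> 2 * s\<^sup>2 * (2 + d) * real N"
    using j assms(4) by (intro mult_left_mono) auto
  also have "\<dots> < (eig X j)\<^sup>2 * real N"
    using gt j assms(1,2) by (intro mult_strict_right_mono) auto
  finally show "2 * s\<^sup>2 * (2 + d) * (real N - real j + 1) < real N * (eig X j)\<^sup>2"
    by (simp add: mult.commute)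
next
  fix j
  assume j: "j \<in> {k+1..q}"
  have "real N * (eig X j)\<^sup>2 < real N * (2 * (2 + d) * s\<^sup>2 * (1 - d / 16)\<^sup>2)"
    using edge_sq_lt[OF assms(3-5) bulk[OF j]] j assms(2) by (intro mult_strict_left_mono) auto
  also have "\<dots> = 2 * s\<^sup>2 * (2 + d) * (real N * (1 - d / 16) * (1 - d / 16))"
    by (simp add: power2_eq_square mult_ac)
  also have "\<dots> \<le> 2 * s\<^sup>2 * (2 + d) * (real N - real j + 1)"
  proof (intro mult_left_mono)
    have "real N * (1 - d / 16) * (1 - d / 16) \<le> real N * (1 - d / 16)"
      using assms(4,5) by (intro mult_left_le) auto
    also have "\<dots> \<le> real N - real j + 1"
      using j assms(6) by (simp add: algebra_simps)
    finally show "real N * (1 - d / 16) * (1 - d / 16) \<le> real N - real j + 1" .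
  qed (use assms(4) in auto)
  finally show "real N * (eig X j)\<^sup>2 < 2 * s\<^sup>2 * (2 + d) * (real N - real j + 1)" .
qed

lemma argmin_gaic_unknown_eq_rank:
  assumes "k \<le> q" "q \<le> N" "0 < s" "0 < d" "d \<le> 1" "16 * real q \<le> real N * d"
    and spike: "\<And>i. i \<in> {1..k} \<Longrightarrow> 2 * s * (1 + d) < eig X i"
    and bulk: "\<And>j. j \<in> {k+1..q} \<Longrightarrow> \<bar>eig X j - 2 * s\<bar> < s * d / 16"
    and noise: "\<bar>sigma_hat_sq N X 0 - s\<^sup>2\<bar> < s\<^sup>2 * d / 32"
    and top: "(\<Sum>i=1..q. (eig X i)\<^sup>2) \<le> (real N + 1) * s\<^sup>2 * d / 32"
  shows "argmin_upto (gaic_unknown C (2 + d) N X) q = k"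
proof -
  note T0 = tail_sq_bounds(1)[OF assms(2) noise top] and Tq = tail_sq_bounds(2)[OF assms(2) noise top]
  show ?thesis
  proof (rule argmin_gaic_unknown_eq[OF assms(1,2)])
    have "0 < (real N + 1) * s\<^sup>2 * (1 - d / 16)"
      using assms(3,5) by simp
    with Tq show "0 < tail_sq N X q"
      by linarith
  next
    fix j
    assume j: "j \<in> {1..k}"
    have "2 * (2 + d) * (real N - real j + 1) * tail_sq N X (j - 1)
        \<le> 2 * (2 + d) * real N * ((real N + 1) * s\<^sup>2 * (1 + d / 32))"
    proof (intro mult_mono)
      show "tail_sq N X (j - 1) \<le> (real N + 1) * s\<^sup>2 * (1 + d / 32)"
        using tail_sq_antimono[of 0 "j - 1" N X] T0(1) by simp
    qed (use j assms(1,2,4) in \<open>auto simp: tail_sq_def sum_nonneg\<close>)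
    also have "\<dots> = real N * (real N + 1) * (2 * (2 + d) * s\<^sup>2 * (1 + d / 32))"
      by (simp add: mult_ac)
    also have "\<dots> < real N * (real N + 1) * (eig X j)\<^sup>2"
      using outlier_sq_gt[OF assms(3) _ spike[OF j]] assms(1,2,4) j
      by (intro mult_strict_left_mono) auto
    finally show "2 * (2 + d) * (real N - real j + 1) * tail_sq N X (j - 1)
        < real N * (real N + 1) * (eig X j)\<^sup>2" .
  next
    fix j
    assume j: "j \<in> {k+1..q}"
    have "real N * (real N + 1) * (eig X j)\<^sup>2
        < real N * (real N + 1) * (2 * (2 + d) * s\<^sup>2 * (1 - d / 16)\<^sup>2)"
      using edge_sq_lt[OF assms(3-5) bulk[OF j]] j assms(2) by (intro mult_strict_left_mono) auto
    also have "\<dots> = 2 * (2 + d) * (real N * (1 - d / 16)) * ((real N + 1) * s\<^sup>2 * (1 - d / 16))"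
      by (simp add: power2_eq_square mult_ac)
    also have "\<dots> \<le> 2 * (2 + d) * (real N - real j + 1) * tail_sq N X j"
    proof (intro mult_mono mult_left_mono)
      show "real N * (1 - d / 16) \<le> real N - real j + 1"
        using j assms(6) by (simp add: algebra_simps)
      show "(real N + 1) * s\<^sup>2 * (1 - d / 16) \<le> tail_sq N X j"
        using tail_sq_antimono[of j q N X] Tq j by simp
    qed (use j assms(2,4,5) in auto)
    finally show "real N * (real N + 1) * (eig X j)\<^sup>2
        < 2 * (2 + d) * (real N - real j + 1) * tail_sq N X j" .
  qed
qed

lemma sum_sq_top_eigs_le:
  assumes "k \<le> q" "0 < s" "0 \<le> d" "d \<le> 1"
    and spike: "\<And>i. i \<in> {1..k} \<Longrightarrow> 2 * s < \<psi> i \<and> \<bar>eig X i - \<psi> i\<bar> < (\<psi> i - 2 * s) / 2"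
    and bulk: "\<And>j. j \<in> {k+1..q} \<Longrightarrow> \<bar>eig X j - 2 * s\<bar> < s * d / 16"
  shows "(\<Sum>i=1..q. (eig X i)\<^sup>2) \<le> (\<Sum>i=1..k. 4 * (\<psi> i)\<^sup>2) + 9 * s\<^sup>2 * real q"
proof -
  have "{1..q} = {1..k} \<union> {k+1..q}" using assms(1) by auto
  then have "(\<Sum>i=1..q. (eig X i)\<^sup>2) = (\<Sum>i=1..k. (eig X i)\<^sup>2) + (\<Sum>j=k+1..q. (eig X j)\<^sup>2)"
    by (simp add: sum.union_disjoint)
  also have "\<dots> \<le> (\<Sum>i=1..k. 4 * (\<psi> i)\<^sup>2) + (\<Sum>j=k+1..q. 9 * s\<^sup>2)"
  proof (intro add_mono sum_mono)
    fix i assume "i \<in> {1..k}"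
    then have "2 * s < \<psi> i" "\<psi> i - (\<psi> i - 2 * s) / 2 < eig X i" "eig X i < \<psi> i + (\<psi> i - 2 * s) / 2"
      using spike[of i] abs_diff_less_iff by blast+
    then have "0 \<le> eig X i" "eig X i \<le> 2 * \<psi> i" using assms(2) by (auto simp: field_simps)
    then have "(eig X i)\<^sup>2 \<le> (2 * \<psi> i)\<^sup>2" by (intro power_mono) auto
    then show "(eig X i)\<^sup>2 \<le> 4 * (\<psi> i)\<^sup>2" by (simp add: power_mult_distrib)
  next
    fix j assume "j \<in> {k+1..q}"
    moreover have "s * d \<le> s" using assms(2-4) by (simp add: mult_left_le)
    moreover have "2 * s - s * d / 16 < eig X j" "eig X j < 2 * s + s * d / 16"
      using bulk[of j] \<open>j \<in> {k+1..q}\<close> abs_diff_less_iff by blast+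
    ultimately have "0 \<le> eig X j" and "eig X j \<le> 3 * s"
      using assms(2) by linarith+
    then have "(eig X j)\<^sup>2 \<le> (3 * s)\<^sup>2" by (intro power_mono) auto
    then show "(eig X j)\<^sup>2 \<le> 9 * s\<^sup>2" by (simp add: power_mult_distrib)
  qed
  also have "(\<Sum>j=k+1..q. 9 * s\<^sup>2) \<le> 9 * s\<^sup>2 * real q"
    using mult_left_mono[of "real (q - k)" "real q" "9 * s\<^sup>2"] by (simp add: mult.commute)
  finally show ?thesis by simp
qed

lemma argmin_gaic_eq_rank_near_limits:
  fixes \<psi> :: "nat \<Rightarrow> real"
  assumes "k \<le> q" "q \<le> N" "0 < s" "0 < d" "d \<le> 1" "16 * real q \<le> real N * d"
    and margin: "\<And>i. i \<in> {1..k} \<Longrightarrow> 2 * s < \<psi> i \<and> 2 * s * d < (\<psi> i - 2 * s) / 2"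
    and room: "(\<Sum>i=1..k. 4 * (\<psi> i)\<^sup>2) + 9 * s\<^sup>2 * real q \<le> (real N + 1) * s\<^sup>2 * d / 32"
    and spike: "\<And>i. i \<in> {1..k} \<Longrightarrow> \<bar>eig X i - \<psi> i\<bar> < (\<psi> i - 2 * s) / 2"
    and bulk: "\<And>j. j \<in> {k+1..q} \<Longrightarrow> \<bar>eig X j - 2 * s\<bar> < s * d / 16"
    and noise: "\<bar>sigma_hat_sq N X 0 - s\<^sup>2\<bar> < s\<^sup>2 * d / 32"
  shows "argmin_upto (gaic_known C s (2 + d) N X) q = k"
    and "argmin_upto (gaic_unknown C' (2 + d) N X) q = k"
proof -
  have outlier: "2 * s * (1 + d) < eig X i" if "i \<in> {1..k}" for i
  proof -
    have "\<psi> i - (\<psi> i - 2 * s) / 2 < eig X i"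
      using spike[OF that] abs_diff_less_iff by blast
    with margin[OF that] show ?thesis
      by (simp add: field_simps)
  qed
  have "(\<Sum>i=1..q. (eig X i)\<^sup>2) \<le> (real N + 1) * s\<^sup>2 * d / 32"
    using sum_sq_top_eigs_le[of k q s d \<psi> X] margin spike bulk room assms(1,3-5) by force
  with outlier show "argmin_upto (gaic_known C s (2 + d) N X) q = k"
    and "argmin_upto (gaic_unknown C' (2 + d) N X) q = k"
    using assms(1-6) bulk noise by (auto intro!: argmin_gaic_known_eq_rank argmin_gaic_unknown_eq_rank)
qed

lemma eventually_argmin_gaic_eq_rank:
  fixes \<psi> \<delta> :: "nat \<Rightarrow> real"
  assumes "0 < s" "k \<le> q" and \<psi>: "\<And>i. i \<in> {1..k} \<Longrightarrow> 2 * s < \<psi> i"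
    and \<delta>: "\<delta> \<longlonglongrightarrow> 0" "filterlim (\<lambda>N. real N * \<delta> N) at_top sequentially"
  shows "\<forall>\<^sub>F N in sequentially. \<forall>X.
           (\<forall>i\<in>{1..k}. \<bar>eig X i - \<psi> i\<bar> < (\<psi> i - 2 * s) / 2)
         \<and> (\<forall>j\<in>{k+1..q}. \<bar>eig X j - 2 * s\<bar> < s * \<delta> N / 16)
         \<and> \<bar>sigma_hat_sq N X 0 - s\<^sup>2\<bar> < s\<^sup>2 * \<delta> N / 32
         \<longrightarrow> argmin_upto (gaic_known (C N) s (2 + \<delta> N) N X) q = k
           \<and> argmin_upto (gaic_unknown (C' N) (2 + \<delta> N) N X) q = k"
proof -
  define R where "R = (\<Sum>i=1..k. 4 * (\<psi> i)\<^sup>2) + 9 * s\<^sup>2 * real q"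
  have large: "\<forall>\<^sub>F N in sequentially. c < real N * \<delta> N" for c
    using \<delta>(2) by (simp add: filterlim_at_top_dense)
  have small: "\<forall>\<^sub>F N in sequentially. \<delta> N < c" if "0 < c" for c
    using \<delta>(1) that by (rule order_tendstoD)
  have pos: "\<forall>\<^sub>F N in sequentially. 0 < \<delta> N"
    using large[of 0] by eventually_elim (simp add: zero_less_mult_iff)
  have "\<forall>\<^sub>F N in sequentially. R \<le> (real N + 1) * s\<^sup>2 * \<delta> N / 32"
    using large[of "32 * R / s\<^sup>2"] pos
  proof eventually_elim
    case (elim N)
    then have "32 * R < real N * \<delta> N * s\<^sup>2"
      using assms(1) by (simp add: divide_less_eq)
    also have "\<dots> \<le> (real N + 1) * \<delta> N * s\<^sup>2"
      using elim by (intro mult_right_mono) auto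
    finally show ?case by (simp add: mult_ac)
  qed
  moreover have "\<forall>\<^sub>F N in sequentially. \<forall>i\<in>{1..k}. \<delta> N < (\<psi> i - 2 * s) / (4 * s)"
    using \<psi> assms(1) by (intro eventually_ball_finite ballI small) auto
  ultimately show ?thesis
    using eventually_ge_at_top[of q] pos small[of 1, simplified] large[of "16 * real q"]
  proof eventually_elim
    case (elim N)
    have "2 * s < \<psi> i \<and> 2 * s * \<delta> N < (\<psi> i - 2 * s) / 2" if "i \<in> {1..k}" for i
      using elim(2) \<psi>[OF that] that assms(1) by (auto simp: field_simps)
    with elim assms(1,2) show ?case
      unfolding R_def by (blast intro: argmin_gaic_eq_rank_near_limits less_imp_le)
  qed
qed


section \<open>Events of probability tending to one\<close>

definition whp :: "'a measure \<Rightarrow> (nat \<Rightarrow> 'a \<Rightarrow> bool) \<Rightarrow> bool" where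
  "whp M P \<longleftrightarrow> (\<lambda>n. measure M {w \<in> space M. \<not> P n w}) \<longlonglongrightarrow> 0"

lemma (in prob_space) whp_conj:
  assumes "whp M P" "whp M Q" "\<And>n. Measurable.pred M (P n)" "\<And>n. Measurable.pred M (Q n)"
  shows "whp M (\<lambda>n w. P n w \<and> Q n w)"
  unfolding whp_def
proof (rule tendsto_sandwich[OF _ _ tendsto_const])
  show "\<forall>\<^sub>F n in sequentially. measure M {w \<in> space M. \<not> (P n w \<and> Q n w)}
      \<le> measure M {w \<in> space M. \<not> P n w} + measure M {w \<in> space M. \<not> Q n w}"
  proof (intro always_eventually allI)
    fix n
    have "{w \<in> space M. \<not> (P n w \<and> Q n w)} = {w \<in> space M. \<not> P n w} \<union> {w \<in> space M. \<not> Q n w}"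
      by auto
    then show "measure M {w \<in> space M. \<not> (P n w \<and> Q n w)}
      \<le> measure M {w \<in> space M. \<not> P n w} + measure M {w \<in> space M. \<not> Q n w}"
      using assms(3,4)[of n] by (simp add: measure_Un_le)
  qed
  show "(\<lambda>n. measure M {w \<in> space M. \<not> P n w} + measure M {w \<in> space M. \<not> Q n w}) \<longlonglongrightarrow> 0"
    using tendsto_add[OF assms(1,2)[unfolded whp_def]] by simp
qed simp

lemma (in prob_space) whp_ball:
  assumes "finite I" "\<And>i. i \<in> I \<Longrightarrow> whp M (P i)" "\<And>i n. i \<in> I \<Longrightarrow> Measurable.pred M (P i n)"
  shows "whp M (\<lambda>n w. \<forall>i\<in>I. P i n w)"
  unfolding whp_def
proof (rule tendsto_sandwich[OF _ _ tendsto_const])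
  show "\<forall>\<^sub>F n in sequentially. measure M {w \<in> space M. \<not> (\<forall>i\<in>I. P i n w)}
      \<le> (\<Sum>i\<in>I. measure M {w \<in> space M. \<not> P i n w})"
  proof (intro always_eventually allI)
    fix n
    have "{w \<in> space M. \<not> (\<forall>i\<in>I. P i n w)} = (\<Union>i\<in>I. {w \<in> space M. \<not> P i n w})"
      by auto
    also have "measure M \<dots> \<le> (\<Sum>i\<in>I. measure M {w \<in> space M. \<not> P i n w})"
      using assms(1,3) by (intro finite_measure_subadditive_finite) auto
    finally show "measure M {w \<in> space M. \<not> (\<forall>i\<in>I. P i n w)}
      \<le> (\<Sum>i\<in>I. measure M {w \<in> space M. \<not> P i n w})" .
  qed
  show "(\<lambda>n. \<Sum>i\<in>I. measure M {w \<in> space M. \<not> P i n w}) \<longlonglongrightarrow> 0"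
    using assms(2) unfolding whp_def by (intro tendsto_null_sum) auto
qed simp

lemma (in prob_space) whp_mono:
  assumes "whp M P" "\<And>n. Measurable.pred M (P n)"
    and "\<forall>\<^sub>F n in sequentially. \<forall>w\<in>space M. P n w \<longrightarrow> Q n w"
  shows "whp M Q"
  unfolding whp_def
proof (rule tendsto_sandwich[OF _ _ tendsto_const assms(1)[unfolded whp_def]])
  show "\<forall>\<^sub>F n in sequentially. measure M {w \<in> space M. \<not> Q n w} \<le> measure M {w \<in> space M. \<not> P n w}"
    using assms(3) by eventually_elim (use assms(2) in \<open>auto intro!: finite_measure_mono\<close>)
qed simp

lemma (in prob_space) whp_imp_prob_tendsto_1:
  assumes "whp M P" "\<And>n. Measurable.pred M (P n)"
  shows "(\<lambda>n. prob {w \<in> space M. P n w}) \<longlonglongrightarrow> 1"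
proof -
  have "prob {w \<in> space M. P n w} = 1 - prob {w \<in> space M. \<not> P n w}" for n
  proof -
    have "{w \<in> space M. P n w} = space M - {w \<in> space M. \<not> P n w}"
      by auto
    then show ?thesis
      using prob_compl[of "{w \<in> space M. \<not> P n w}"] assms(2)[of n] by simp
  qed
  then show ?thesis
    using tendsto_diff[OF tendsto_const assms(1)[unfolded whp_def], of 1] by simp
qed

lemma (in prob_space) whp_of_AE_tendsto:
  fixes X :: "nat \<Rightarrow> 'a \<Rightarrow> real"
  assumes "\<And>n. X n \<in> borel_measurable M" "AE w in M. (\<lambda>n. X n w) \<longlonglongrightarrow> c" "0 < \<epsilon>"
  shows "whp M (\<lambda>n w. \<bar>X n w - c\<bar> < \<epsilon>)"
proof -
  define S where "S n = {w \<in> space M. \<not> \<bar>X n w - c\<bar> < \<epsilon>}" for n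
  have [measurable]: "X n \<in> borel_measurable M" for n
    by (rule assms(1))
  have [measurable]: "S n \<in> sets M" for n
    unfolding S_def by measurable
  have "(\<lambda>n. \<integral>w. (indicator (S n) w :: real) \<partial>M) \<longlonglongrightarrow> (\<integral>w. 0 \<partial>M)"
  proof (rule integral_dominated_convergence[where w="\<lambda>_. 1"])
    show "AE w in M. (\<lambda>n. indicator (S n) w :: real) \<longlonglongrightarrow> 0"
      using assms(2)
    proof eventually_elim
      case (elim w)
      then have "\<forall>\<^sub>F n in sequentially. dist (X n w) c < \<epsilon>"
        using assms(3) by (rule tendstoD)
      then have "\<forall>\<^sub>F n in sequentially. (indicator (S n) w :: real) = 0"
        by eventually_elim (auto simp: S_def dist_real_def)
      then show ?case
        by (rule tendsto_eventually)
    qed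
  qed auto
  then show ?thesis
    unfolding whp_def S_def[symmetric] by simp
qed

lemma (in real_distribution) cdf_tails_at_continuity_points:
  assumes "0 < \<epsilon>"
  obtains a b where "isCont (cdf M) a" "isCont (cdf M) b" "cdf M a < \<epsilon>" "1 - \<epsilon> < cdf M b"
proof -
  have countable: "countable {x. \<not> isCont (cdf M) x}"
    by (intro mono_ctble_discont monoI cdf_nondecreasing)
  have "\<forall>\<^sub>F x in at_bot. cdf M x < \<epsilon>"
    using cdf_lim_at_bot assms by (rule order_tendstoD)
  then obtain a0 where a0: "\<And>x. x \<le> a0 \<Longrightarrow> cdf M x < \<epsilon>"
    by (auto simp: eventually_at_bot_linorder)
  have "\<forall>\<^sub>F x in at_top. 1 - \<epsilon> < cdf M x"
    using cdf_lim_at_top_prob assms by (intro order_tendstoD) auto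
  then obtain b0 where b0: "\<And>x. b0 \<le> x \<Longrightarrow> 1 - \<epsilon> < cdf M x"
    by (auto simp: eventually_at_top_linorder)
  obtain a where "a \<in> {..<a0}" "isCont (cdf M) a"
    using open_minus_countable[OF countable, of "{..<a0}"] by auto
  moreover obtain b where "b \<in> {b0<..}" "isCont (cdf M) b"
    using open_minus_countable[OF countable, of "{b0<..}"] by auto
  ultimately show thesis
    using a0 b0 by (intro that[of a b]) auto
qed

lemma (in prob_space) whp_abs_less_of_weak_conv:
  fixes Y :: "nat \<Rightarrow> 'a \<Rightarrow> real"
  assumes Y: "\<And>n. Y n \<in> borel_measurable M" and conv: "weak_conv_m (\<lambda>n. distr M borel (Y n)) \<mu>"
    and \<mu>: "real_distribution \<mu>" and t: "filterlim t at_top sequentially"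
  shows "whp M (\<lambda>n w. \<bar>Y n w\<bar> < t n)"
  unfolding whp_def
proof (rule order_tendstoI)
  fix e :: real
  assume "0 < e"
  then obtain a b where cont: "isCont (cdf \<mu>) a" "isCont (cdf \<mu>) b"
    and tails: "cdf \<mu> a < e / 4" "1 - e / 4 < cdf \<mu> b"
    using real_distribution.cdf_tails_at_continuity_points[OF \<mu>, of "e / 4"] by auto
  have cdf_Y: "cdf (distr M borel (Y n)) x = prob {w \<in> space M. Y n w \<le> x}" for n x
    using Y[of n] by (simp add: cdf_def measure_distr vimage_def Int_def conj_commute)
  have lim: "(\<lambda>n. prob {w \<in> space M. Y n w \<le> x}) \<longlonglongrightarrow> cdf \<mu> x" if "isCont (cdf \<mu>) x" for x
    using conv that unfolding weak_conv_m_def weak_conv_def cdf_Y by blast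
  have "\<forall>\<^sub>F n in sequentially. prob {w \<in> space M. Y n w \<le> a} < cdf \<mu> a + e / 4"
    using lim[OF cont(1)] by (rule order_tendstoD(2)) (use \<open>0 < e\<close> in simp)
  moreover have "\<forall>\<^sub>F n in sequentially. cdf \<mu> b - e / 4 < prob {w \<in> space M. Y n w \<le> b}"
    using lim[OF cont(2)] by (rule order_tendstoD(1)) (use \<open>0 < e\<close> in simp)
  moreover have "\<forall>\<^sub>F n in sequentially. max \<bar>a\<bar> \<bar>b\<bar> < t n"
    using t unfolding filterlim_at_top_dense by blast
  ultimately show "\<forall>\<^sub>F n in sequentially. measure M {w \<in> space M. \<not> \<bar>Y n w\<bar> < t n} < e"
  proof eventually_elim
    case (elim n)
    have [measurable]: "Y n \<in> borel_measurable M"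
      by (rule Y)
    have "{w \<in> space M. \<not> \<bar>Y n w\<bar> < t n}
        \<subseteq> {w \<in> space M. Y n w \<le> a} \<union> (space M - {w \<in> space M. Y n w \<le> b})"
      using elim(3) by auto
    then have "measure M {w \<in> space M. \<not> \<bar>Y n w\<bar> < t n}
        \<le> prob {w \<in> space M. Y n w \<le> a} + prob (space M - {w \<in> space M. Y n w \<le> b})"
      by (intro order.trans[OF finite_measure_mono measure_Un_le]) auto
    also have "prob (space M - {w \<in> space M. Y n w \<le> b}) = 1 - prob {w \<in> space M. Y n w \<le> b}"
      by (intro prob_compl) measurable
    finally show ?case
      using elim(1,2) tails by simp
  qed
qed (auto intro!: always_eventually intro: less_le_trans[OF _ measure_nonneg])

lemma (in prob_space) whp_abs_less_of_scaled_weak_conv: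
  fixes l :: "nat \<Rightarrow> 'a \<Rightarrow> real"
  assumes "\<And>n. l n \<in> borel_measurable M"
    and "weak_conv_m (\<lambda>n. distr M borel (\<lambda>w. real n powr a * (l n w - c))) \<mu>" "real_distribution \<mu>"
    and "filterlim (\<lambda>n. real n powr a * r n) at_top sequentially"
  shows "whp M (\<lambda>n w. \<bar>l n w - c\<bar> < r n)"
proof (rule whp_mono)
  show "whp M (\<lambda>n w. \<bar>real n powr a * (l n w - c)\<bar> < real n powr a * r n)"
    using assms by (intro whp_abs_less_of_weak_conv) auto
  show "Measurable.pred M (\<lambda>w. \<bar>real n powr a * (l n w - c)\<bar> < real n powr a * r n)" for n
    using assms(1)[of n] by measurable
  show "\<forall>\<^sub>F n in sequentially. \<forall>w\<in>space M.
      \<bar>real n powr a * (l n w - c)\<bar> < real n powr a * r n \<longrightarrow> \<bar>l n w - c\<bar> < r n"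
    using eventually_ge_at_top[of 1] by eventually_elim (auto simp: abs_mult)
qed

lemma (in prob_space) whp_abs_less_of_second_moment:
  fixes Z :: "nat \<Rightarrow> 'a \<Rightarrow> real"
  assumes "\<And>n. Z n \<in> borel_measurable M"
    and "\<forall>\<^sub>F n in sequentially. integrable M (\<lambda>w. (Z n w)\<^sup>2) \<and> expectation (\<lambda>w. (Z n w)\<^sup>2) \<le> K"
    and "filterlim r at_top sequentially"
  shows "whp M (\<lambda>n w. \<bar>Z n w\<bar> < r n)"
  unfolding whp_def
proof (rule tendsto_sandwich[OF _ _ tendsto_const])
  show "\<forall>\<^sub>F n in sequentially. measure M {w \<in> space M. \<not> \<bar>Z n w\<bar> < r n} \<le> K / (r n)\<^sup>2"
    using assms(2) filterlim_at_top_dense[THEN iffD1, OF assms(3), rule_format, of 0]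
  proof eventually_elim
    case (elim n)
    then have "measure M {w \<in> space M. r n \<le> \<bar>Z n w\<bar>} \<le> expectation (\<lambda>w. (Z n w)\<^sup>2) / (r n)\<^sup>2"
      using assms(1) by (intro second_moment_method) auto
    also have "\<dots> \<le> K / (r n)\<^sup>2"
      using elim by (intro divide_right_mono) auto
    finally show ?case
      by (simp add: not_less)
  qed
  have "filterlim (\<lambda>n. (r n)\<^sup>2) at_top sequentially"
    unfolding power2_eq_square by (rule filterlim_at_top_mult_at_top[OF assms(3) assms(3)])
  then show "(\<lambda>n. K / (r n)\<^sup>2) \<longlonglongrightarrow> 0"
    by (intro tendsto_divide_0[OF tendsto_const] filterlim_at_top_imp_at_infinity)
qed simp


section \<open>Concentration of the Frobenius norm of the spiked GOE matrix\<close>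

lemma (in prob_space) normal_moments:
  assumes X: "distributed M lborel X (normal_density 0 s)" and s: "0 < s"
  shows normal_integrable_power: "integrable M (\<lambda>w. X w ^ n)"
    and "expectation X = 0"
    and "expectation (\<lambda>w. X w ^ 2) = s\<^sup>2"
    and "expectation (\<lambda>w. X w ^ 3) = 0"
    and "expectation (\<lambda>w. X w ^ 4) = 3 * s ^ 4"
proof -
  have moment: "expectation (\<lambda>w. X w ^ n) = (\<integral>x. normal_density 0 s x * (x - 0) ^ n \<partial>lborel)" for n
    using distributed_integral[OF X, of "\<lambda>x. x ^ n"] by simp
  show "integrable M (\<lambda>w. X w ^ n)"
    using distributed_integrable[OF X, of "\<lambda>x. x ^ n"] integrable_normal_moment[OF s, of 0 n] by simp
  show "expectation X = 0"
    using moment[of 1] integral_normal_moment_odd[OF s, of 0 0] by simp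
  show "expectation (\<lambda>w. X w ^ 3) = 0"
    using moment[of 3] integral_normal_moment_odd[OF s, of 0 1] by (simp add: numeral_3_eq_3)
  show "expectation (\<lambda>w. X w ^ 2) = s\<^sup>2"
    using moment[of "2 * 1"] integral_normal_moment_even[OF s, of 0 1] s by (simp add: fact_numeral)
  show "expectation (\<lambda>w. X w ^ 4) = 3 * s ^ 4"
    using moment[of "2 * 2"] integral_normal_moment_even[OF s, of 0 2] s
    by (simp add: fact_numeral field_simps power2_eq_square eval_nat_numeral)
qed

lemma (in prob_space) normal_quadratic_moments:
  fixes a b :: real
  assumes X: "distributed M lborel X (normal_density 0 s)" and s: "0 < s"
  defines "Y \<equiv> \<lambda>w. a * X w + b * ((X w)\<^sup>2 - s\<^sup>2)"
  shows "integrable M Y" "integrable M (\<lambda>w. (Y w)\<^sup>2)"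
    and "expectation Y = 0" "expectation (\<lambda>w. (Y w)\<^sup>2) = a\<^sup>2 * s\<^sup>2 + 2 * b\<^sup>2 * s ^ 4"
proof -
  have I: "integrable M X" "integrable M (\<lambda>w. X w ^ 2)" "integrable M (\<lambda>w. X w ^ 3)"
    "integrable M (\<lambda>w. X w ^ 4)"
    using normal_integrable_power[OF X s, of 1] normal_integrable_power[OF X s] by simp_all
  note m = normal_moments(2-5)[OF X s]
  have Y: "Y = (\<lambda>w. a * X w + b * X w ^ 2 - b * s\<^sup>2)"
    unfolding Y_def by (simp add: algebra_simps)
  have Y2: "(\<lambda>w. (Y w)\<^sup>2) = (\<lambda>w. b\<^sup>2 * s ^ 4 - 2 * a * b * s\<^sup>2 * X w + (a\<^sup>2 - 2 * b\<^sup>2 * s\<^sup>2) * X w ^ 2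
      + 2 * a * b * X w ^ 3 + b\<^sup>2 * X w ^ 4)"
    unfolding Y_def by (simp add: fun_eq_iff eval_nat_numeral algebra_simps)
  show "integrable M Y"
    unfolding Y using I by simp
  show "integrable M (\<lambda>w. (Y w)\<^sup>2)"
    unfolding Y2 using I by simp
  show "expectation Y = 0"
    unfolding Y using I m by (simp add: prob_space)
  have "expectation (\<lambda>w. (Y w)\<^sup>2) = b\<^sup>2 * s ^ 4 + (a\<^sup>2 - 2 * b\<^sup>2 * s\<^sup>2) * s\<^sup>2 + b\<^sup>2 * (3 * s ^ 4)"
    unfolding Y2 using I m by (simp add: prob_space)
  then show "expectation (\<lambda>w. (Y w)\<^sup>2) = a\<^sup>2 * s\<^sup>2 + 2 * b\<^sup>2 * s ^ 4"
    by (simp add: eval_nat_numeral algebra_simps)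
qed

lemma (in prob_space) indep_vars_expectation_sum_square:
  fixes Z :: "'i \<Rightarrow> 'a \<Rightarrow> real"
  assumes "finite I" "indep_vars (\<lambda>_. borel) Z I"
    and "\<And>i. i \<in> I \<Longrightarrow> integrable M (\<lambda>w. (Z i w)\<^sup>2)" "\<And>i. i \<in> I \<Longrightarrow> expectation (Z i) = 0"
  shows "integrable M (\<lambda>w. (\<Sum>i\<in>I. Z i w)\<^sup>2)"
    and "expectation (\<lambda>w. (\<Sum>i\<in>I. Z i w)\<^sup>2) = (\<Sum>i\<in>I. expectation (\<lambda>w. (Z i w)\<^sup>2))"
proof -
  have Z: "integrable M (Z i)" if "i \<in> I" for i
  proof (rule square_integrable_imp_integrable)
    show "Z i \<in> borel_measurable M"
      using assms(2) that unfolding indep_vars_def by blast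
  qed (use assms(3) that in simp)
  have cross: "integrable M (\<lambda>w. Z i w * Z j w) \<and>
      expectation (\<lambda>w. Z i w * Z j w) = (if i = j then expectation (\<lambda>w. (Z i w)\<^sup>2) else 0)"
    if "i \<in> I" "j \<in> I" for i j
  proof (cases "i = j")
    case False
    have ij: "indep_vars (\<lambda>_. borel) Z {i, j}"
      using that by (intro indep_vars_subset[OF assms(2)]) auto
    have Zij: "\<And>l. l \<in> {i, j} \<Longrightarrow> integrable M (Z l)"
      using Z that by auto
    have "integrable M (\<lambda>w. \<Prod>l\<in>{i, j}. Z l w)"
      by (rule indep_vars_integrable[OF _ ij Zij]) simp
    moreover have "expectation (\<lambda>w. \<Prod>l\<in>{i, j}. Z l w) = (\<Prod>l\<in>{i, j}. expectation (Z l))"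
      by (rule indep_vars_lebesgue_integral[OF _ ij Zij]) simp
    ultimately show ?thesis
      using False assms(4) that by simp
  qed (use assms(3) that in \<open>simp add: power2_eq_square\<close>)
  have sq: "(\<lambda>w. (\<Sum>i\<in>I. Z i w)\<^sup>2) = (\<lambda>w. \<Sum>i\<in>I. \<Sum>j\<in>I. Z i w * Z j w)"
    by (simp add: power2_eq_square sum_product)
  show "integrable M (\<lambda>w. (\<Sum>i\<in>I. Z i w)\<^sup>2)"
    unfolding sq using cross by (intro Bochner_Integration.integrable_sum) auto
  have "expectation (\<lambda>w. (\<Sum>i\<in>I. Z i w)\<^sup>2) = (\<Sum>i\<in>I. \<Sum>j\<in>I. expectation (\<lambda>w. Z i w * Z j w))"
    unfolding sq using cross by (simp add: Bochner_Integration.integral_sum Bochner_Integration.integrable_sum)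
  also have "\<dots> = (\<Sum>i\<in>I. \<Sum>j\<in>I. if i = j then expectation (\<lambda>w. (Z i w)\<^sup>2) else 0)"
    using cross by (intro sum.cong refl) simp
  also have "\<dots> = (\<Sum>i\<in>I. expectation (\<lambda>w. (Z i w)\<^sup>2))"
    using assms(1) by simp
  finally show "expectation (\<lambda>w. (\<Sum>i\<in>I. Z i w)\<^sup>2) = (\<Sum>i\<in>I. expectation (\<lambda>w. (Z i w)\<^sup>2))" .
qed

(* A position (i, j) with i <= j stands for sym_weight (i, j) entries of a symmetric matrix. *)
definition sym_weight :: "nat \<times> nat \<Rightarrow> real" where
  "sym_weight p = (if fst p = snd p then 1 else 2)"

definition goe_var :: "nat \<Rightarrow> nat \<times> nat \<Rightarrow> real" where
  "goe_var N p = (if fst p = snd p then 2 / real N else 1 / real N)"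

lemma sum_symmetric_eq_sum_upper:
  fixes h :: "nat \<Rightarrow> nat \<Rightarrow> real"
  shows "(\<Sum>i<N. \<Sum>j<N. h (min i j) (max i j)) =
    (\<Sum>p\<in>{(i, j). i \<le> j \<and> j < N}. sym_weight p * h (fst p) (snd p))"
proof (induction N)
  case (Suc N)
  let ?f = "\<lambda>p. sym_weight p * h (fst p) (snd p)"
  have fin: "finite {(i, j). i \<le> j \<and> j < N}"
    by (rule finite_subset[of _ "{..N} \<times> {..N}"]) auto
  have split: "{(i, j). i \<le> j \<and> j < Suc N} = {(i, j). i \<le> j \<and> j < N} \<union> (\<lambda>i. (i, N)) ` {..N}"
    by auto
  have "(\<Sum>p\<in>{(i, j). i \<le> j \<and> j < Suc N}. ?f p)
      = (\<Sum>p\<in>{(i, j). i \<le> j \<and> j < N}. ?f p) + (\<Sum>p\<in>(\<lambda>i. (i, N)) ` {..N}. ?f p)"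
    unfolding split by (rule sum.union_disjoint) (use fin in auto)
  also have "(\<Sum>p\<in>(\<lambda>i. (i, N)) ` {..N}. ?f p) = 2 * (\<Sum>i<N. h i N) + h N N"
    by (simp add: sum.reindex inj_on_def sym_weight_def lessThan_Suc_atMost[symmetric] sum_distrib_left)
  finally show ?case
    using Suc.IH by (simp add: sum.distrib min_def max_def)
qed simp

lemma sum_sym_weight_goe_var:
  assumes "1 \<le> N"
  shows "(\<Sum>p\<in>{(i, j). i \<le> j \<and> j < N}. sym_weight p * goe_var N p) = real N + 1"
proof -
  have "(\<Sum>p\<in>{(i, j). i \<le> j \<and> j < N}. sym_weight p * goe_var N p)
      = (\<Sum>i<N. \<Sum>j<N. (\<lambda>a b. goe_var N (a, b)) (min i j) (max i j))"
    by (subst sum_symmetric_eq_sum_upper) simp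
  also have "\<dots> = (\<Sum>i<N. \<Sum>j<N. 1 / real N + (if j = i then 1 / real N else 0))"
    by (intro sum.cong refl) (auto simp: goe_var_def min_def max_def)
  also have "\<dots> = (\<Sum>i<N. 1 + 1 / real N)"
    using assms by (intro sum.cong refl) (simp add: sum.distrib)
  also have "\<dots> = real N + 1"
    using assms by (simp add: field_simps)
  finally show ?thesis .
qed

lemma sum_sym_weight_spike_sq:
  fixes l :: "nat \<Rightarrow> real" and u :: "nat \<Rightarrow> nat \<Rightarrow> real"
  assumes "finite R"
    and orth: "\<And>r s. r \<in> R \<Longrightarrow> s \<in> R \<Longrightarrow> (\<Sum>i<N. u r i * u s i) = (if r = s then 1 else 0)"
  shows "(\<Sum>p\<in>{(i, j). i \<le> j \<and> j < N}. sym_weight p * (\<Sum>r\<in>R. l r * u r (fst p) * u r (snd p))\<^sup>2)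
    = (\<Sum>r\<in>R. (l r)\<^sup>2)"
proof -
  let ?A = "\<lambda>i j. \<Sum>r\<in>R. l r * u r i * u r j"
  have "(\<Sum>p\<in>{(i, j). i \<le> j \<and> j < N}. sym_weight p * (?A (fst p) (snd p))\<^sup>2)
      = (\<Sum>i<N. \<Sum>j<N. (?A (min i j) (max i j))\<^sup>2)"
    by (rule sum_symmetric_eq_sum_upper[symmetric])
  also have "\<dots> = (\<Sum>i<N. \<Sum>j<N. \<Sum>r\<in>R. \<Sum>s\<in>R. l r * l s * ((u r i * u s i) * (u r j * u s j)))"
    by (intro sum.cong refl) (auto simp: min_def max_def power2_eq_square sum_product mult_ac)
  also have "\<dots> = (\<Sum>i<N. \<Sum>r\<in>R. \<Sum>j<N. \<Sum>s\<in>R. l r * l s * ((u r i * u s i) * (u r j * u s j)))"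
    by (intro sum.cong refl sum.swap)
  also have "\<dots> = (\<Sum>r\<in>R. \<Sum>i<N. \<Sum>s\<in>R. \<Sum>j<N. l r * l s * ((u r i * u s i) * (u r j * u s j)))"
    by (subst sum.swap) (intro sum.cong refl sum.swap)
  also have "\<dots> = (\<Sum>r\<in>R. \<Sum>s\<in>R. \<Sum>i<N. \<Sum>j<N. l r * l s * ((u r i * u s i) * (u r j * u s j)))"
    by (intro sum.cong refl sum.swap)
  also have "\<dots> = (\<Sum>r\<in>R. \<Sum>s\<in>R. l r * l s * ((\<Sum>i<N. u r i * u s i) * (\<Sum>j<N. u r j * u s j)))"
    unfolding sum_product by (simp only: sum_distrib_left)
  also have "\<dots> = (\<Sum>r\<in>R. \<Sum>s\<in>R. if s = r then (l r)\<^sup>2 else 0)"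
    using orth by (intro sum.cong refl) (auto simp: power2_eq_square)
  also have "\<dots> = (\<Sum>r\<in>R. (l r)\<^sup>2)"
    using assms(1) by simp
  finally show ?thesis .
qed

lemma sym_weight_sq_goe_var_le:
  assumes "1 \<le> N" "0 \<le> x"
  shows "(sym_weight p)\<^sup>2 * (4 * x * goe_var N p + 2 * y * (goe_var N p)\<^sup>2)
    \<le> 8 * (sym_weight p * x) + 4 * y / real N * (sym_weight p * goe_var N p)"
proof -
  have "(sym_weight p)\<^sup>2 * (4 * x * goe_var N p + 2 * y * (goe_var N p)\<^sup>2)
      = 8 * sym_weight p * x / real N + 8 * y / (real N)\<^sup>2"
    using assms(1) by (simp add: sym_weight_def goe_var_def power2_eq_square field_simps)
  also have "\<dots> \<le> 8 * sym_weight p * x + 8 * y / (real N)\<^sup>2"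
    using assms by (simp add: sym_weight_def divide_le_eq mult_le_cancel_left1)
  also have "\<dots> = 8 * (sym_weight p * x) + 4 * y / real N * (sym_weight p * goe_var N p)"
    using assms(1) by (simp add: sym_weight_def goe_var_def power2_eq_square field_simps)
  finally show ?thesis .
qed

lemma sum_sq_entries_spiked_X:
  fixes g :: "nat \<Rightarrow> nat \<Rightarrow> nat \<Rightarrow> 'a \<Rightarrow> real" and u :: "nat \<Rightarrow> nat \<Rightarrow> nat \<Rightarrow> real"
    and lam :: "nat \<Rightarrow> real" and k N :: nat
  defines "A i j \<equiv> \<Sum>r\<in>{1..k}. lam r * u N r i * u N r j"
  shows "(\<Sum>i<N. \<Sum>j<N. (spiked_X k lam u sg g N w $$ (i,j))\<^sup>2)
       = (\<Sum>p\<in>{(i, j). i \<le> j \<and> j < N}. sym_weight p * (A (fst p) (snd p) + sg * g N (fst p) (snd p) w)\<^sup>2)"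
proof -
  have "A i j = A (min i j) (max i j)" for i j
    unfolding A_def by (cases "i \<le> j") (auto simp: min_def max_def mult_ac)
  then have "(\<Sum>i<N. \<Sum>j<N. (spiked_X k lam u sg g N w $$ (i,j))\<^sup>2)
      = (\<Sum>i<N. \<Sum>j<N. (\<lambda>a b. (A a b + sg * g N a b w)\<^sup>2) (min i j) (max i j))"
    unfolding spiked_X_def A_def by (intro sum.cong refl) simp
  also have "\<dots> = (\<Sum>p\<in>{(i, j). i \<le> j \<and> j < N}.
      sym_weight p * (A (fst p) (snd p) + sg * g N (fst p) (snd p) w)\<^sup>2)"
    by (rule sum_symmetric_eq_sum_upper)
  finally show ?thesis .
qed

lemma (in prob_space) spiked_sum_sq_entries_variance:
  fixes g :: "nat \<Rightarrow> nat \<Rightarrow> nat \<Rightarrow> 'a \<Rightarrow> real" and u :: "nat \<Rightarrow> nat \<Rightarrow> nat \<Rightarrow> real"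
    and lam :: "nat \<Rightarrow> real" and k N :: nat and sg :: real
  assumes indep: "indep_vars (\<lambda>_. borel) (\<lambda>(i, j). g N i j) {(i, j). i \<le> j \<and> j < N}"
    and off: "\<And>i j. i < j \<Longrightarrow> j < N \<Longrightarrow> distributed M lborel (g N i j) (normal_density 0 (sqrt (1 / real N)))"
    and diag: "\<And>i. i < N \<Longrightarrow> distributed M lborel (g N i i) (normal_density 0 (sqrt (2 / real N)))"
    and orth: "\<And>r s. r \<in> {1..k} \<Longrightarrow> s \<in> {1..k} \<Longrightarrow> (\<Sum>i<N. u N r i * u N s i) = (if r = s then 1 else 0)"
    and N: "1 \<le> N"
  defines "L \<equiv> \<Sum>r\<in>{1..k}. (lam r)\<^sup>2"
  defines "D \<equiv> \<lambda>w. (\<Sum>i<N. \<Sum>j<N. (spiked_X k lam u sg g N w $$ (i,j))\<^sup>2) - (L + sg\<^sup>2 * (real N + 1))"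
  shows "integrable M (\<lambda>w. (D w)\<^sup>2)" and "expectation (\<lambda>w. (D w)\<^sup>2) \<le> 8 * sg\<^sup>2 * L + 8 * sg ^ 4"
proof -
  define I where "I = {(i, j). i \<le> j \<and> j < N}"
  define A where "A p = (\<Sum>r\<in>{1..k}. lam r * u N r (fst p) * u N r (snd p))" for p :: "nat \<times> nat"
  define G where "G p = g N (fst p) (snd p)" for p
  define Z where "Z p w = 2 * sym_weight p * sg * A p * G p w
    + sym_weight p * sg\<^sup>2 * ((G p w)\<^sup>2 - (sqrt (goe_var N p))\<^sup>2)" for p w
  have fin: "finite I"
    unfolding I_def by (rule finite_subset[of _ "{..N} \<times> {..N}"]) auto
  have v: "0 < goe_var N p" "(sqrt (goe_var N p))\<^sup>2 = goe_var N p" for p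
    unfolding goe_var_def using N by auto
  have G: "distributed M lborel (G p) (normal_density 0 (sqrt (goe_var N p)))" if "p \<in> I" for p
    using that off[of "fst p" "snd p"] diag[of "fst p"] unfolding I_def G_def goe_var_def by (cases p) auto
  have Z: "integrable M (\<lambda>w. (Z p w)\<^sup>2)" "expectation (Z p) = 0"
    "expectation (\<lambda>w. (Z p w)\<^sup>2)
      = (sym_weight p)\<^sup>2 * (4 * (sg\<^sup>2 * (A p)\<^sup>2) * goe_var N p + 2 * sg ^ 4 * (goe_var N p)\<^sup>2)"
    if "p \<in> I" for p
  proof -
    have "(sqrt (goe_var N p)) ^ 4 = ((sqrt (goe_var N p))\<^sup>2)\<^sup>2"
      by (simp flip: power_mult)
    with normal_quadratic_moments[OF G[OF that], of "2 * sym_weight p * sg * A p" "sym_weight p * sg\<^sup>2"] v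
    show "integrable M (\<lambda>w. (Z p w)\<^sup>2)" "expectation (Z p) = 0"
      "expectation (\<lambda>w. (Z p w)\<^sup>2)
        = (sym_weight p)\<^sup>2 * (4 * (sg\<^sup>2 * (A p)\<^sup>2) * goe_var N p + 2 * sg ^ 4 * (goe_var N p)\<^sup>2)"
      unfolding Z_def[abs_def] by (simp_all add: power_mult_distrib algebra_simps)
  qed
  have Z_indep: "indep_vars (\<lambda>_. borel) Z I"
  proof -
    have "indep_vars (\<lambda>_. borel) (\<lambda>p w. (\<lambda>p x. 2 * sym_weight p * sg * A p * x
        + sym_weight p * sg\<^sup>2 * (x\<^sup>2 - (sqrt (goe_var N p))\<^sup>2)) p ((\<lambda>(i, j). g N i j) p w)) I"
      using indep unfolding I_def by (rule indep_vars_compose2) simp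
    then show ?thesis
      unfolding Z_def[abs_def] G_def by (simp add: split_beta)
  qed
  have spike: "(\<Sum>p\<in>I. sym_weight p * (A p)\<^sup>2) = L"
    unfolding I_def A_def L_def by (rule sum_sym_weight_spike_sq) (simp_all add: orth)
  have noise: "(\<Sum>p\<in>I. sym_weight p * goe_var N p) = real N + 1"
    unfolding I_def using N by (rule sum_sym_weight_goe_var)
  have D: "D w = (\<Sum>p\<in>I. Z p w)" for w
  proof -
    have "sym_weight p * (A p + sg * G p w)\<^sup>2
        = sym_weight p * (A p)\<^sup>2 + sg\<^sup>2 * (sym_weight p * goe_var N p) + Z p w" for p
      unfolding Z_def v(2) by (simp add: power2_eq_square algebra_simps)
    then show ?thesis
      using sum_sq_entries_spiked_X[where k=k and lam=lam and u=u and N=N and sg=sg and g=g and w=w] spike noise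
      unfolding D_def I_def[symmetric] A_def[symmetric] G_def[symmetric]
      by (simp add: sum.distrib sum_distrib_left[symmetric])
  qed
  note sum_square = indep_vars_expectation_sum_square[OF fin Z_indep Z(1,2)]
  show "integrable M (\<lambda>w. (D w)\<^sup>2)"
    unfolding D using sum_square(1) .
  have "expectation (\<lambda>w. (D w)\<^sup>2) = (\<Sum>p\<in>I. expectation (\<lambda>w. (Z p w)\<^sup>2))"
    unfolding D by (rule sum_square(2))
  also have "\<dots> \<le> (\<Sum>p\<in>I. 8 * (sym_weight p * (sg\<^sup>2 * (A p)\<^sup>2)) + 4 * sg ^ 4 / real N * (sym_weight p * goe_var N p))"
  proof (rule sum_mono)
    fix p
    assume "p \<in> I"
    show "expectation (\<lambda>w. (Z p w)\<^sup>2)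
      \<le> 8 * (sym_weight p * (sg\<^sup>2 * (A p)\<^sup>2)) + 4 * sg ^ 4 / real N * (sym_weight p * goe_var N p)"
      unfolding Z(3)[OF \<open>p \<in> I\<close>] by (rule sym_weight_sq_goe_var_le[OF N]) simp
  qed
  also have "\<dots> = 8 * sg\<^sup>2 * (\<Sum>p\<in>I. sym_weight p * (A p)\<^sup>2)
      + 4 * sg ^ 4 / real N * (\<Sum>p\<in>I. sym_weight p * goe_var N p)"
    by (simp add: sum.distrib sum_distrib_left sum_divide_distrib mult_ac)
  also have "\<dots> = 8 * sg\<^sup>2 * L + 4 * sg ^ 4 * (1 + 1 / real N)"
    using N by (simp add: spike noise field_simps)
  also have "\<dots> \<le> 8 * sg\<^sup>2 * L + 4 * sg ^ 4 * 2"
    using N by (intro add_left_mono mult_left_mono) (auto simp: field_simps)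
  finally show "expectation (\<lambda>w. (D w)\<^sup>2) \<le> 8 * sg\<^sup>2 * L + 8 * sg ^ 4"
    by simp
qed

lemma (in prob_space) whp_tail_sq_spiked:
  fixes g :: "nat \<Rightarrow> nat \<Rightarrow> nat \<Rightarrow> 'a \<Rightarrow> real" and u :: "nat \<Rightarrow> nat \<Rightarrow> nat \<Rightarrow> real"
    and lam :: "nat \<Rightarrow> real" and k :: nat and sg :: real and \<rho> :: "nat \<Rightarrow> real"
  assumes indep: "\<And>N. indep_vars (\<lambda>_. borel) (\<lambda>(i, j). g N i j) {(i, j). i \<le> j \<and> j < N}"
    and off: "\<And>N i j. i < j \<Longrightarrow> j < N \<Longrightarrow>
      distributed M lborel (g N i j) (normal_density 0 (sqrt (1 / real N)))"
    and diag: "\<And>N i. i < N \<Longrightarrow> distributed M lborel (g N i i) (normal_density 0 (sqrt (2 / real N)))"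
    and orth: "\<And>N r s. k \<le> N \<Longrightarrow> r \<in> {1..k} \<Longrightarrow> s \<in> {1..k} \<Longrightarrow>
      (\<Sum>i<N. u N r i * u N s i) = (if r = s then 1 else 0)"
    and eig: "\<And>N i. (\<lambda>w. eig (spiked_X k lam u sg g N w) i) \<in> borel_measurable M"
    and \<rho>: "filterlim \<rho> at_top sequentially"
  shows "whp M (\<lambda>N w. \<bar>tail_sq N (spiked_X k lam u sg g N w) 0
    - ((\<Sum>r\<in>{1..k}. (lam r)\<^sup>2) + sg\<^sup>2 * (real N + 1))\<bar> < \<rho> N)"
proof (rule whp_abs_less_of_second_moment[OF _ _ \<rho>])
  have [measurable]: "(\<lambda>w. eig (spiked_X k lam u sg g N w) i) \<in> borel_measurable M" for N i
    by (rule eig)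
  show "(\<lambda>w. tail_sq N (spiked_X k lam u sg g N w) 0
      - ((\<Sum>r\<in>{1..k}. (lam r)\<^sup>2) + sg\<^sup>2 * (real N + 1))) \<in> borel_measurable M" for N
    unfolding tail_sq_def by measurable
  have tail_eq: "tail_sq N (spiked_X k lam u sg g N w) 0 = (\<Sum>i<N. \<Sum>j<N. (spiked_X k lam u sg g N w $$ (i,j))\<^sup>2)"
    for N w
    by (rule tail_sq_0_eq_sum_sq_entries) (auto simp: spiked_X_def min.commute max.commute mult_ac)
  show "\<forall>\<^sub>F N in sequentially.
      integrable M (\<lambda>w. (tail_sq N (spiked_X k lam u sg g N w) 0
        - ((\<Sum>r\<in>{1..k}. (lam r)\<^sup>2) + sg\<^sup>2 * (real N + 1)))\<^sup>2)
    \<and> expectation (\<lambda>w. (tail_sq N (spiked_X k lam u sg g N w) 0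
        - ((\<Sum>r\<in>{1..k}. (lam r)\<^sup>2) + sg\<^sup>2 * (real N + 1)))\<^sup>2)
      \<le> 8 * sg\<^sup>2 * (\<Sum>r\<in>{1..k}. (lam r)\<^sup>2) + 8 * sg ^ 4"
    using eventually_ge_at_top[of "max 1 k"]
  proof eventually_elim
    case (elim N)
    then have "k \<le> N" "1 \<le> N"
      by auto
    from spiked_sum_sq_entries_variance[where N=N and g=g and k=k and u=u and lam=lam and sg=sg,
        OF indep off diag orth[OF \<open>k \<le> N\<close>] \<open>1 \<le> N\<close>]
    show ?case
      unfolding tail_eq by simp
  qed
qed

lemma (in prob_space) whp_sigma_hat_sq_spiked:
  fixes g :: "nat \<Rightarrow> nat \<Rightarrow> nat \<Rightarrow> 'a \<Rightarrow> real" and u :: "nat \<Rightarrow> nat \<Rightarrow> nat \<Rightarrow> real"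
    and lam :: "nat \<Rightarrow> real" and k :: nat and sg :: real and e :: "nat \<Rightarrow> real"
  assumes indep: "\<And>N. indep_vars (\<lambda>_. borel) (\<lambda>(i, j). g N i j) {(i, j). i \<le> j \<and> j < N}"
    and off: "\<And>N i j. i < j \<Longrightarrow> j < N \<Longrightarrow>
      distributed M lborel (g N i j) (normal_density 0 (sqrt (1 / real N)))"
    and diag: "\<And>N i. i < N \<Longrightarrow> distributed M lborel (g N i i) (normal_density 0 (sqrt (2 / real N)))"
    and orth: "\<And>N r s. k \<le> N \<Longrightarrow> r \<in> {1..k} \<Longrightarrow> s \<in> {1..k} \<Longrightarrow>
      (\<Sum>i<N. u N r i * u N s i) = (if r = s then 1 else 0)"
    and eig: "\<And>N i. (\<lambda>w. eig (spiked_X k lam u sg g N w) i) \<in> borel_measurable M"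
    and e: "filterlim (\<lambda>N. real N * e N) at_top sequentially"
  shows "whp M (\<lambda>N w. \<bar>sigma_hat_sq N (spiked_X k lam u sg g N w) 0 - sg\<^sup>2\<bar> < e N)"
proof -
  define L where "L = (\<Sum>r\<in>{1..k}. (lam r)\<^sup>2)"
  define D where "D N w = tail_sq N (spiked_X k lam u sg g N w) 0 - (L + sg\<^sup>2 * (real N + 1))" for N w
  have [measurable]: "(\<lambda>w. eig (spiked_X k lam u sg g N w) i) \<in> borel_measurable M" for N i
    by (rule eig)
  have "filterlim (\<lambda>N. 1 / 2 * (real N * e N)) at_top sequentially"
    by (rule filterlim_tendsto_pos_mult_at_top[OF tendsto_const _ e]) simp
  from whp_tail_sq_spiked[OF indep off diag orth eig this]
  have "whp M (\<lambda>N w. \<bar>D N w\<bar> < 1 / 2 * (real N * e N))"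
    unfolding D_def L_def .
  then show ?thesis
  proof (rule whp_mono)
    show "Measurable.pred M (\<lambda>w. \<bar>D N w\<bar> < 1 / 2 * (real N * e N))" for N
      unfolding D_def tail_sq_def by measurable
    have "\<forall>\<^sub>F N in sequentially. 2 * L < real N * e N"
      using e by (simp add: filterlim_at_top_dense)
    then show "\<forall>\<^sub>F N in sequentially. \<forall>w\<in>space M. \<bar>D N w\<bar> < 1 / 2 * (real N * e N) \<longrightarrow>
        \<bar>sigma_hat_sq N (spiked_X k lam u sg g N w) 0 - sg\<^sup>2\<bar> < e N"
    proof (eventually_elim, intro ballI impI)
      fix N w
      assume L: "2 * L < real N * e N" and D: "\<bar>D N w\<bar> < 1 / 2 * (real N * e N)"
      have "0 \<le> L"
        unfolding L_def by (simp add: sum_nonneg)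
      then have "0 < real N * e N"
        using L by linarith
      then have "0 < e N"
        by (simp add: zero_less_mult_iff)
      with L D \<open>0 \<le> L\<close> have "\<bar>D N w + L\<bar> < (real N + 1) * e N"
        by (simp add: abs_if algebra_simps split: if_splits)
      moreover have "sigma_hat_sq N (spiked_X k lam u sg g N w) 0 - sg\<^sup>2 = (D N w + L) / (real N + 1)"
        unfolding sigma_hat_sq_def D_def by (simp add: field_simps)
      ultimately show "\<bar>sigma_hat_sq N (spiked_X k lam u sg g N w) 0 - sg\<^sup>2\<bar> < e N"
        by (simp add: abs_divide divide_less_eq mult.commute)
    qed
  qed
qed


section \<open>Consistency of the generalised AIC\<close>

lemma (in prob_space) gaic_weakly_consistent:
  fixes Y :: "nat \<Rightarrow> 'a \<Rightarrow> real mat" and \<psi> \<delta> :: "nat \<Rightarrow> real"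
  assumes eig: "\<And>N i. (\<lambda>w. eig (Y N w) i) \<in> borel_measurable M"
    and "0 < s" "k \<le> q" and \<psi>: "\<And>i. i \<in> {1..k} \<Longrightarrow> 2 * s < \<psi> i"
    and \<delta>: "\<delta> \<longlonglongrightarrow> 0" "filterlim (\<lambda>N. real N * \<delta> N) at_top sequentially"
    and spike: "\<And>i \<epsilon>. i \<in> {1..k} \<Longrightarrow> 0 < \<epsilon> \<Longrightarrow> whp M (\<lambda>N w. \<bar>eig (Y N w) i - \<psi> i\<bar> < \<epsilon>)"
    and bulk: "\<And>j c. j \<in> {k+1..q} \<Longrightarrow> 0 < c \<Longrightarrow> whp M (\<lambda>N w. \<bar>eig (Y N w) j - 2 * s\<bar> < c * \<delta> N)"
    and noise: "\<And>c. 0 < c \<Longrightarrow> whp M (\<lambda>N w. \<bar>sigma_hat_sq N (Y N w) 0 - s\<^sup>2\<bar> < c * \<delta> N)"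
  shows "(\<lambda>N. prob {w \<in> space M. argmin_upto (gaic_known (C N) s (2 + \<delta> N) N (Y N w)) q = k}) \<longlonglongrightarrow> 1"
    and "(\<lambda>N. prob {w \<in> space M. argmin_upto (gaic_unknown (C' N) (2 + \<delta> N) N (Y N w)) q = k}) \<longlonglongrightarrow> 1"
proof -
  have [measurable]: "(\<lambda>w. eig (Y N w) i) \<in> borel_measurable M" for N i
    by (rule eig)
  have [measurable]: "(\<lambda>w. tail_sq N (Y N w) j) \<in> borel_measurable M" for N j
    unfolding tail_sq_def by measurable
  define P where "P N w \<longleftrightarrow> (\<forall>i\<in>{1..k}. \<bar>eig (Y N w) i - \<psi> i\<bar> < (\<psi> i - 2 * s) / 2)
      \<and> (\<forall>j\<in>{k+1..q}. \<bar>eig (Y N w) j - 2 * s\<bar> < s * \<delta> N / 16)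
      \<and> \<bar>sigma_hat_sq N (Y N w) 0 - s\<^sup>2\<bar> < s\<^sup>2 * \<delta> N / 32" for N w
  have P_meas: "Measurable.pred M (P N)" for N
    unfolding P_def sigma_hat_sq_def by measurable
  have "whp M P"
    unfolding P_def
  proof (intro whp_conj whp_ball)
    show "whp M (\<lambda>N w. \<bar>eig (Y N w) i - \<psi> i\<bar> < (\<psi> i - 2 * s) / 2)" if "i \<in> {1..k}" for i
      using that \<psi>[OF that] by (intro spike) auto
    show "whp M (\<lambda>N w. \<bar>eig (Y N w) j - 2 * s\<bar> < s * \<delta> N / 16)" if "j \<in> {k+1..q}" for j
      using bulk[OF that, of "s / 16"] \<open>0 < s\<close> by simp
    show "whp M (\<lambda>N w. \<bar>sigma_hat_sq N (Y N w) 0 - s\<^sup>2\<bar> < s\<^sup>2 * \<delta> N / 32)"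
      using noise[of "s\<^sup>2 / 32"] \<open>0 < s\<close> by simp
  qed (simp_all add: sigma_hat_sq_def)
  moreover have "\<forall>\<^sub>F N in sequentially. \<forall>w\<in>space M. P N w \<longrightarrow>
      argmin_upto (gaic_known (C N) s (2 + \<delta> N) N (Y N w)) q = k
      \<and> argmin_upto (gaic_unknown (C' N) (2 + \<delta> N) N (Y N w)) q = k"
  proof (rule eventually_mono[OF eventually_argmin_gaic_eq_rank[where C=C and C'=C' and \<psi>=\<psi>,
        OF \<open>0 < s\<close> \<open>k \<le> q\<close> _ \<delta>]], goal_cases)
    case (1 i)
    then show ?case by (rule \<psi>)
  next
    case (2 N)
    show ?case
      by (intro ballI impI, rule 2[rule_format]) (simp add: P_def)
  qed
  ultimately have "whp M (\<lambda>N w. argmin_upto (gaic_known (C N) s (2 + \<delta> N) N (Y N w)) q = k)"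
    and "whp M (\<lambda>N w. argmin_upto (gaic_unknown (C' N) (2 + \<delta> N) N (Y N w)) q = k)"
    using P_meas by (auto elim!: whp_mono elim: eventually_mono)
  moreover have [measurable]: "(\<lambda>w. gaic_known c s' \<gamma> N (Y N w) j) \<in> borel_measurable M"
    "(\<lambda>w. gaic_unknown c \<gamma> N (Y N w) j) \<in> borel_measurable M" for c s' \<gamma> N j
    unfolding gaic_known_def gaic_unknown_def sigma_hat_sq_def by measurable
  ultimately show "(\<lambda>N. prob {w \<in> space M. argmin_upto (gaic_known (C N) s (2 + \<delta> N) N (Y N w)) q = k}) \<longlonglongrightarrow> 1"
    and "(\<lambda>N. prob {w \<in> space M. argmin_upto (gaic_unknown (C' N) (2 + \<delta> N) N (Y N w)) q = k}) \<longlonglongrightarrow> 1"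
    by (auto intro!: whp_imp_prob_tendsto_1 measurable_argmin_upto_eq)
qed

lemma two_mult_lt_add_sq_div:
  fixes s x :: real
  assumes "0 < s" "s < x"
  shows "2 * s < x + s\<^sup>2 / x"
proof -
  have "x + s\<^sup>2 / x - 2 * s = (x - s)\<^sup>2 / x"
    using assms by (simp add: field_simps power2_eq_square)
  moreover have "0 < (x - s)\<^sup>2 / x"
    using assms by simp
  ultimately show ?thesis
    by linarith
qed

lemma filterlim_mult_at_top_of_powr:
  fixes f :: "nat \<Rightarrow> real"
  assumes "filterlim (\<lambda>n. real n powr a * f n) at_top sequentially" "a \<le> 1"
  shows "filterlim (\<lambda>n. real n * f n) at_top sequentially"
proof (rule filterlim_at_top_mono[OF assms(1)])
  have "\<forall>\<^sub>F n in sequentially. 0 < real n powr a * f n"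
    using assms(1) by (simp add: filterlim_at_top_dense)
  then show "\<forall>\<^sub>F n in sequentially. real n powr a * f n \<le> real n * f n"
    using eventually_ge_at_top[of 1]
  proof eventually_elim
    case (elim n)
    then have "0 < f n"
      by (simp add: zero_less_mult_iff)
    moreover have "real n powr a \<le> real n powr 1"
      using elim assms(2) by (intro powr_mono) auto
    ultimately show ?case
      using elim by (simp add: mult_right_mono)
  qed
qed

theorem theorem2p2:
  fixes M :: "'a measure"
    and g :: "nat \<Rightarrow> nat \<Rightarrow> nat \<Rightarrow> 'a \<Rightarrow> real"
    and u :: "nat \<Rightarrow> nat \<Rightarrow> nat \<Rightarrow> real"
    and lam :: "nat \<Rightarrow> real"
    and sg :: real
    and k q :: nat
    and C :: "nat \<Rightarrow> real"
    and delta :: "nat \<Rightarrow> real"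
    and TW :: "nat \<Rightarrow> real measure"
  assumes M: "prob_space M"
    \<comment> \<open>GOE entries: independent, N(0,1/N) off-diagonal, N(0,2/N) on the diagonal\<close>
    and g_indep: "\<And>N. prob_space.indep_vars M (\<lambda>_. borel) (\<lambda>(i, j). g N i j)
                          {(i, j). i \<le> j \<and> j < N}"
    and g_off: "\<And>N i j. i < j \<Longrightarrow> j < N \<Longrightarrow>
                  distributed M lborel (g N i j) (normal_density 0 (sqrt (1 / real N)))"
    and g_diag: "\<And>N i. i < N \<Longrightarrow>
                  distributed M lborel (g N i i) (normal_density 0 (sqrt (2 / real N)))"
    \<comment> \<open>spike: A = sum_{r=1..k} lam_r u_r u_r^T, orthonormal u_r, lam_1 >= ... >= lam_k > sg > 0\<close>
    and sigma_pos: "sg > 0"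
    and u_orth: "\<And>N r s. k \<le> N \<Longrightarrow> r \<in> {1..k} \<Longrightarrow> s \<in> {1..k} \<Longrightarrow>
                   (\<Sum>i<N. u N r i * u N s i) = (if r = s then 1 else 0)"
    and lam_mono: "\<And>r s. 1 \<le> r \<Longrightarrow> r \<le> s \<Longrightarrow> s \<le> k \<Longrightarrow> lam s \<le> lam r"
    and lam_gt: "\<And>r. r \<in> {1..k} \<Longrightarrow> lam r > sg"
    and kq: "k \<le> q"
    \<comment> \<open>the eigenvalues are random variables\<close>
    and eig_meas: "\<And>N i. (\<lambda>w. eig (spiked_X k lam u sg g N w) i) \<in> borel_measurable M"
    \<comment> \<open>assumed almost-sure limits of the top eigenvalues\<close>
    and lim_spike: "\<And>i. i \<in> {1..k} \<Longrightarrow> AE w in M.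
          (\<lambda>N. eig (spiked_X k lam u sg g N w) i) \<longlonglongrightarrow> lam i + sg\<^sup>2 / lam i"
    and lim_bulk: "\<And>i. i \<in> {k+1..q} \<Longrightarrow> AE w in M.
          (\<lambda>N. eig (spiked_X k lam u sg g N w) i) \<longlonglongrightarrow> 2 * sg"
    \<comment> \<open>assumed Tracy--Widom fluctuations (TW m = GOE Tracy--Widom law of order m)\<close>
    and TW_distr: "\<And>m. m \<ge> 1 \<Longrightarrow> real_distribution (TW m)"
    and lim_TW: "\<And>i. i > k \<Longrightarrow> weak_conv_m
          (\<lambda>N. distr M borel
                 (\<lambda>w. real N powr (2/3) * (eig (spiked_X k lam u sg g N w) i - 2 * sg)))
          (TW (i - k))"
    \<comment> \<open>delta_N \<rightarrow> 0 and delta_N \<gg> N^(-2/3)\<close>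
    and delta_lim: "delta \<longlonglongrightarrow> 0"
    and delta_big: "filterlim (\<lambda>N. real N powr (2/3) * delta N) at_top sequentially"
  shows "(\<lambda>N. measure M {w \<in> space M.
            argmin_upto (gaic_known (C N) sg (2 + delta N) N (spiked_X k lam u sg g N w)) q = k})
           \<longlonglongrightarrow> 1
       \<and> (\<lambda>N. measure M {w \<in> space M.
            argmin_upto (gaic_unknown (C N) (2 + delta N) N (spiked_X k lam u sg g N w)) q = k})
           \<longlonglongrightarrow> 1"
proof -
  interpret prob_space M by (rule M)
  define X where "X N = spiked_X k lam u sg g N" for N
  define \<psi> where "\<psi> i = lam i + sg\<^sup>2 / lam i" for i
  have \<delta>: "filterlim (\<lambda>N. real N * delta N) at_top sequentially"
    using delta_big by (rule filterlim_mult_at_top_of_powr) simp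
  have eig_X: "(\<lambda>w. eig (X N w) i) \<in> borel_measurable M" for N i
    unfolding X_def by (rule eig_meas)
  have \<psi>: "2 * sg < \<psi> i" if "i \<in> {1..k}" for i
    unfolding \<psi>_def using sigma_pos lam_gt[OF that] by (rule two_mult_lt_add_sq_div)
  have spike: "whp M (\<lambda>N w. \<bar>eig (X N w) i - \<psi> i\<bar> < \<epsilon>)" if "i \<in> {1..k}" "0 < \<epsilon>" for i \<epsilon>
    using lim_spike[OF that(1)] that(2) unfolding X_def \<psi>_def by (intro whp_of_AE_tendsto eig_meas)
  have bulk: "whp M (\<lambda>N w. \<bar>eig (X N w) j - 2 * sg\<bar> < c * delta N)" if "j \<in> {k+1..q}" "0 < c" for j c
    using lim_TW[of j] TW_distr[of "j - k"] that filterlim_tendsto_pos_mult_at_top[OF tendsto_const _ delta_big, of c]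
    unfolding X_def by (intro whp_abs_less_of_scaled_weak_conv[where a="2/3"] eig_meas) (auto simp: mult_ac)
  have noise: "whp M (\<lambda>N w. \<bar>sigma_hat_sq N (X N w) 0 - sg\<^sup>2\<bar> < c * delta N)" if "0 < c" for c
    unfolding X_def using filterlim_tendsto_pos_mult_at_top[OF tendsto_const that \<delta>]
    by (intro whp_sigma_hat_sq_spiked[OF g_indep g_off g_diag u_orth eig_meas]) (auto simp: mult_ac)
  have "(\<lambda>N. prob {w \<in> space M. argmin_upto (gaic_known (C N) sg (2 + delta N) N (X N w)) q = k}) \<longlonglongrightarrow> 1"
    "(\<lambda>N. prob {w \<in> space M. argmin_upto (gaic_unknown (C N) (2 + delta N) N (X N w)) q = k}) \<longlonglongrightarrow> 1"
    by (rule gaic_weakly_consistent[where \<psi>=\<psi>]; use eig_X sigma_pos kq \<psi> delta_lim \<delta> spike bulk noise in blast)+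
  then show ?thesis
    unfolding X_def by simp
qed

end
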